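(* Let $k \ge 1$ and let $\mathcal{A}_k = (Q, \Sigma, \delta, Q_0, F)$ be a $k$-ambiguous nondeterministic Büchi automaton. Then $\mathrm{kdis}(\mathcal{A}_k)$ is an IBA, and for every $w \in \Sigma^\omega$ we have $L_{\mathrm{kdis}(\mathcal{A}_k)}(w) = 1$ if and only if $\mathcal{A}_k$ has a final path over $w$; i.e. $\mathrm{kdis}(\mathcal{A}_k)$ accepts the same language as $\mathcal{A}_k$.
   Context: An NBA $(Q,\Sigma,\delta,Q_0,F)$ has finite state set $Q$, alphabet $\Sigma$, transition relation $\delta : Q\times\Sigma \to 2^Q$, initial states $Q_0$, final states $F$. For $w = w_0w_1\ldots \in \Sigma^\omega$ a path is $q_0q_1\ldots$ with $q_0 \in Q_0$, $q_{i+1} \in \delta(q_i,w_i)$; it is final if some state of $F$ occurs infinitely often. The NBA accepts the words with at least one final path; it is $k$-ambiguous if every word has at most $k$ final paths. Weighted Büchi automata: $\mathcal{A} = (Q,\Sigma,M,\alpha,F)$ with $M:\Sigma\to\mathbb{Q}^{Q\times Q}$, $\alpha\in\mathbb{Q}^Q$, $F \subseteq Q$, $M(a_1\cdots a_m)=M(a_1)\cdots M(a_m)$. It is ultimately stable if for all $q,q'\in Q$, $a\in\Sigma$ such that $M(u)_{q',q}\ne 0$ for some $u\in\Sigma^*$, we have $M(a)_{q,q'}\in\{0,1\}$. A path over $w=w_0w_1\ldots$ is $q_0q_1\ldots$ with $\alpha(q_0)\ne0$ and $M(w_i)_{q_i,q_{i+1}}\ne0$ for all $i$; it is final if it visits $F$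 infinitely often. Its weight is $\alpha(q_0)\lim_{i\to\infty}\prod_{n\le i}M(w_n)_{q_n,q_{n+1}}$ (the limit exists by ultimate stability). For words with finitely many final paths, $L_\mathcal{A}(w)$ is the sum of the weights of the final paths. $\mathcal{A}$ is an IBA if it is ultimately stable, there is $N\in\mathbb{N}$ with at most $N$ final paths over every $w\in\Sigma^\omega$, and $L_\mathcal{A}(w)\in\{0,1\}$ for all $w\in\Sigma^\omega$; it accepts $\{w\mid L_\mathcal{A}(w)=1\}$. Construction $\mathrm{kdis}$. Let $\mathcal{B}=\{\bot,\top\}$ (false/true), $[k]=\{0,1,\ldots,k\}$, and for $\vec r\in[k]^{Q\times\mathcal{B}}$ let $\mathrm{size}(\vec r)=\sum_{(q,b)}\vec r_{q,b}$. Let $b''(\vec r)=\bot$ if $\vec r_{q,\bot}=0$ for all $q\in Q$, and $b''(\vec r)=\top$ otherwise. For $\vec r,\vec r'\in[k]^{Q\times\mathcal{B}}$ and $a\in\Sigma$, let $w(\vec r,a,\vec r')$ be the number of functions $f: Q\times\mathcal{B}\times\{1,\ldots,k\}\to 2^Q$ such that $f(q,b,i)=\emptyset$ if $i>\vec r_{q,b}$, $f(q,b,i)$ is a nonempty subset of $\delta(q,a)$ if $i\le\vec r_{q,b}$, and for every $(q',b')\in Q\times\mathcal{B}$ the number of triples $(q,b,i)$ with $q'\in f(q,b,i)$ and $b'=((q\in F)\vee b)\wedge b''(\vec r)$ equals $\vec r'_{q',b'}$. Define $\mathrm{kdis}'(\mathcal{A}_k)=(Q'',\Sigma,\Delta'',\alpha',F'')$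 with $Q''=[k]^{Q\times\mathcal{B}}\setminus\{\vec 0\}$; $\Delta''(a)_{\vec r,\vec r'}=(-1)^{\mathrm{size}(\vec r')-\mathrm{size}(\vec r)}w(\vec r,a,\vec r')$; $\alpha'_{\vec r}=(-1)^{\mathrm{size}(\vec r)-1}$ if $\vec r_{q,b}=0$ whenever $q\notin Q_0$ or $b=\top$, and $\vec r_{q,\bot}\le1$ for $q\in Q_0$, and $\alpha'_{\vec r}=0$ otherwise; $F''=\{\vec r\in Q''\mid \vec r_{q,\bot}=0\ \forall q\in Q\}$. $\mathrm{kdis}(\mathcal{A}_k)$ is $\mathrm{kdis}'(\mathcal{A}_k)$ restricted to those states that are reachable (from a state with nonzero $\alpha'$ via transitions of nonzero weight) and from which a cycle through a state of $F''$ can be reached. *)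

theory Defs
  imports Complex_Main
begin

definition nba :: "'q set \<Rightarrow> 'a set \<Rightarrow> ('q \<Rightarrow> 'a \<Rightarrow> 'q set) \<Rightarrow> 'q set \<Rightarrow> 'q set \<Rightarrow> bool" where
  "nba Q Sig \<delta> Q0 F \<longleftrightarrow> finite Q \<and> finite Sig \<and> Q0 \<subseteq> Q \<and> F \<subseteq> Q \<and>
     (\<forall>q\<in>Q. \<forall>a\<in>Sig. \<delta> q a \<subseteq> Q)"

definition word :: "'a set \<Rightarrow> (nat \<Rightarrow> 'a) \<Rightarrow> bool" where
  "word Sig w \<longleftrightarrow> (\<forall>i. w i \<in> Sig)"

definition nba_path :: "('q \<Rightarrow> 'a \<Rightarrow> 'q set) \<Rightarrow> 'q set \<Rightarrow> (nat \<Rightarrow> 'a) \<Rightarrow> (nat \<Rightarrow> 'q) \<Rightarrow> bool" where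
  "nba_path \<delta> Q0 w p \<longleftrightarrow> p 0 \<in> Q0 \<and> (\<forall>i. p (Suc i) \<in> \<delta> (p i) (w i))"

definition nba_final_paths :: "('q \<Rightarrow> 'a \<Rightarrow> 'q set) \<Rightarrow> 'q set \<Rightarrow> 'q set \<Rightarrow> (nat \<Rightarrow> 'a) \<Rightarrow> (nat \<Rightarrow> 'q) set" where
  "nba_final_paths \<delta> Q0 F w = {p. nba_path \<delta> Q0 w p \<and> infinite {i. p i \<in> F}}"

definition k_ambiguous :: "'q set \<Rightarrow> 'a set \<Rightarrow> ('q \<Rightarrow> 'a \<Rightarrow> 'q set) \<Rightarrow> 'q set \<Rightarrow> 'q set \<Rightarrow> nat \<Rightarrow> bool" where
  "k_ambiguous Q Sig \<delta> Q0 F k \<longleftrightarrow>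
     (\<forall>w. word Sig w \<longrightarrow> finite (nba_final_paths \<delta> Q0 F w) \<and> card (nba_final_paths \<delta> Q0 F w) \<le> k)"

section \<open>Weighted Buechi automata (S, Sigma, M, alpha, F); weights in real (values rational)\<close>

primrec Mword :: "'s set \<Rightarrow> ('a \<Rightarrow> 's \<Rightarrow> 's \<Rightarrow> real) \<Rightarrow> 'a list \<Rightarrow> 's \<Rightarrow> 's \<Rightarrow> real" where
  "Mword S M [] q q' = (if q = q' then 1 else 0)"
| "Mword S M (a # u) q q' = (\<Sum>p\<in>S. M a q p * Mword S M u p q')"

definition ultimately_stable :: "'s set \<Rightarrow> 'a set \<Rightarrow> ('a \<Rightarrow> 's \<Rightarrow> 's \<Rightarrow> real) \<Rightarrow> bool" where
  "ultimately_stable S Sig M \<longleftrightarrow>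
     (\<forall>q\<in>S. \<forall>q'\<in>S. \<forall>a\<in>Sig. (\<exists>u\<in>lists Sig. Mword S M u q' q \<noteq> 0) \<longrightarrow> M a q q' \<in> {0, 1})"

definition wba_path :: "'s set \<Rightarrow> ('a \<Rightarrow> 's \<Rightarrow> 's \<Rightarrow> real) \<Rightarrow> ('s \<Rightarrow> real) \<Rightarrow> (nat \<Rightarrow> 'a) \<Rightarrow> (nat \<Rightarrow> 's) \<Rightarrow> bool" where
  "wba_path S M \<alpha> w p \<longleftrightarrow> (\<forall>i. p i \<in> S) \<and> \<alpha> (p 0) \<noteq> 0 \<and> (\<forall>i. M (w i) (p i) (p (Suc i)) \<noteq> 0)"

definition wba_final_paths :: "'s set \<Rightarrow> ('a \<Rightarrow> 's \<Rightarrow> 's \<Rightarrow> real) \<Rightarrow> ('s \<Rightarrow> real) \<Rightarrow> 's set \<Rightarrow> (nat \<Rightarrow> 'a) \<Rightarrow> (nat \<Rightarrow> 's) set" where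
  "wba_final_paths S M \<alpha> F w = {p. wba_path S M \<alpha> w p \<and> infinite {i. p i \<in> F}}"

definition path_weight :: "('a \<Rightarrow> 's \<Rightarrow> 's \<Rightarrow> real) \<Rightarrow> ('s \<Rightarrow> real) \<Rightarrow> (nat \<Rightarrow> 'a) \<Rightarrow> (nat \<Rightarrow> 's) \<Rightarrow> real" where
  "path_weight M \<alpha> w p = \<alpha> (p 0) * lim (\<lambda>i. \<Prod>n\<le>i. M (w n) (p n) (p (Suc n)))"

text \<open>L_A(w): sum of the weights of the final paths (meaningful when there are finitely many).\<close>
definition wba_L :: "'s set \<Rightarrow> ('a \<Rightarrow> 's \<Rightarrow> 's \<Rightarrow> real) \<Rightarrow> ('s \<Rightarrow> real) \<Rightarrow> 's set \<Rightarrow> (nat \<Rightarrow> 'a) \<Rightarrow> real" where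
  "wba_L S M \<alpha> F w = (\<Sum>p\<in>wba_final_paths S M \<alpha> F w. path_weight M \<alpha> w p)"

definition IBA :: "'s set \<Rightarrow> 'a set \<Rightarrow> ('a \<Rightarrow> 's \<Rightarrow> 's \<Rightarrow> real) \<Rightarrow> ('s \<Rightarrow> real) \<Rightarrow> 's set \<Rightarrow> bool" where
  "IBA S Sig M \<alpha> F \<longleftrightarrow> finite S \<and> ultimately_stable S Sig M \<and>
     (\<exists>N::nat. \<forall>w. word Sig w \<longrightarrow> finite (wba_final_paths S M \<alpha> F w) \<and> card (wba_final_paths S M \<alpha> F w) \<le> N) \<and>
     (\<forall>w. word Sig w \<longrightarrow> wba_L S M \<alpha> F w \<in> {0, 1})"

text \<open>States r : Q x B -> [k], represented as functions that vanish outside Q x UNIV.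
  False stands for bottom, True for top.\<close>

definition kstates :: "'q set \<Rightarrow> nat \<Rightarrow> ('q \<times> bool \<Rightarrow> nat) set" where
  "kstates Q k = {r. (\<forall>x. r x \<le> k) \<and> (\<forall>q b. q \<notin> Q \<longrightarrow> r (q, b) = 0) \<and> r \<noteq> (\<lambda>_. 0)}"

definition rsize :: "'q set \<Rightarrow> ('q \<times> bool \<Rightarrow> nat) \<Rightarrow> nat" where
  "rsize Q r = (\<Sum>x\<in>Q \<times> (UNIV::bool set). r x)"

definition bpp :: "'q set \<Rightarrow> ('q \<times> bool \<Rightarrow> nat) \<Rightarrow> bool" where
  "bpp Q r \<longleftrightarrow> (\<exists>q\<in>Q. r (q, False) \<noteq> 0)"

definition kdis_w :: "'q set \<Rightarrow> ('q \<Rightarrow> 'a \<Rightarrow> 'q set) \<Rightarrow> 'q set \<Rightarrow> nat \<Rightarrow>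
    ('q \<times> bool \<Rightarrow> nat) \<Rightarrow> 'a \<Rightarrow> ('q \<times> bool \<Rightarrow> nat) \<Rightarrow> nat" where
  "kdis_w Q \<delta> F k r a r' = card {f :: 'q \<times> bool \<times> nat \<Rightarrow> 'q set.
     (\<forall>x. x \<notin> Q \<times> UNIV \<times> {1..k} \<longrightarrow> f x = {}) \<and>
     (\<forall>q\<in>Q. \<forall>b. \<forall>i\<in>{1..k}.
        (i > r (q, b) \<longrightarrow> f (q, b, i) = {}) \<and>
        (i \<le> r (q, b) \<longrightarrow> f (q, b, i) \<noteq> {} \<and> f (q, b, i) \<subseteq> \<delta> q a)) \<and>
     (\<forall>q'\<in>Q. \<forall>b'.
        card {(q, b, i). (q, b, i) \<in> Q \<times> UNIV \<times> {1..k} \<and> q' \<in> f (q, b, i) \<and>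
                          b' = ((q \<in> F \<or> b) \<and> bpp Q r)} = r' (q', b'))}"

definition kdis_M' :: "'q set \<Rightarrow> ('q \<Rightarrow> 'a \<Rightarrow> 'q set) \<Rightarrow> 'q set \<Rightarrow> nat \<Rightarrow>
    'a \<Rightarrow> ('q \<times> bool \<Rightarrow> nat) \<Rightarrow> ('q \<times> bool \<Rightarrow> nat) \<Rightarrow> real" where
  "kdis_M' Q \<delta> F k a r r' =
     ((-1::real) powi (int (rsize Q r') - int (rsize Q r))) * real (kdis_w Q \<delta> F k r a r')"

definition kdis_alpha' :: "'q set \<Rightarrow> 'q set \<Rightarrow> ('q \<times> bool \<Rightarrow> nat) \<Rightarrow> real" where
  "kdis_alpha' Q Q0 r =
     (if (\<forall>q b. (q \<notin> Q0 \<or> b = True) \<longrightarrow> r (q, b) = 0) \<and> (\<forall>q\<in>Q0. r (q, False) \<le> 1)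
      then (-1::real) ^ (rsize Q r - 1) else 0)"

definition kdis_F' :: "'q set \<Rightarrow> nat \<Rightarrow> ('q \<times> bool \<Rightarrow> nat) set" where
  "kdis_F' Q k = {r \<in> kstates Q k. \<forall>q\<in>Q. r (q, False) = 0}"

definition kdis_edges :: "'q set \<Rightarrow> 'a set \<Rightarrow> ('q \<Rightarrow> 'a \<Rightarrow> 'q set) \<Rightarrow> 'q set \<Rightarrow> nat \<Rightarrow>
    (('q \<times> bool \<Rightarrow> nat) \<times> ('q \<times> bool \<Rightarrow> nat)) set" where
  "kdis_edges Q Sig \<delta> F k = {(r, r'). r \<in> kstates Q k \<and> r' \<in> kstates Q k \<and>
     (\<exists>a\<in>Sig. kdis_M' Q \<delta> F k a r r' \<noteq> 0)}"

definition kdis_S :: "'q set \<Rightarrow> 'a set \<Rightarrow> ('q \<Rightarrow> 'a \<Rightarrow> 'q set) \<Rightarrow> 'q set \<Rightarrow> 'q set \<Rightarrow> nat \<Rightarrow>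
    ('q \<times> bool \<Rightarrow> nat) set" where
  "kdis_S Q Sig \<delta> Q0 F k =
     {r \<in> kstates Q k.
        (\<exists>r0\<in>kstates Q k. kdis_alpha' Q Q0 r0 \<noteq> 0 \<and> (r0, r) \<in> (kdis_edges Q Sig \<delta> F k)\<^sup>*) \<and>
        (\<exists>s\<in>kdis_F' Q k. (r, s) \<in> (kdis_edges Q Sig \<delta> F k)\<^sup>* \<and> (s, s) \<in> (kdis_edges Q Sig \<delta> F k)\<^sup>+)}"

definition kdis_M :: "'q set \<Rightarrow> 'a set \<Rightarrow> ('q \<Rightarrow> 'a \<Rightarrow> 'q set) \<Rightarrow> 'q set \<Rightarrow> 'q set \<Rightarrow> nat \<Rightarrow>
    'a \<Rightarrow> ('q \<times> bool \<Rightarrow> nat) \<Rightarrow> ('q \<times> bool \<Rightarrow> nat) \<Rightarrow> real" where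
  "kdis_M Q Sig \<delta> Q0 F k a r r' =
     (if r \<in> kdis_S Q Sig \<delta> Q0 F k \<and> r' \<in> kdis_S Q Sig \<delta> Q0 F k then kdis_M' Q \<delta> F k a r r' else 0)"

definition kdis_alpha :: "'q set \<Rightarrow> 'a set \<Rightarrow> ('q \<Rightarrow> 'a \<Rightarrow> 'q set) \<Rightarrow> 'q set \<Rightarrow> 'q set \<Rightarrow> nat \<Rightarrow>
    ('q \<times> bool \<Rightarrow> nat) \<Rightarrow> real" where
  "kdis_alpha Q Sig \<delta> Q0 F k r =
     (if r \<in> kdis_S Q Sig \<delta> Q0 F k then kdis_alpha' Q Q0 r else 0)"

definition kdis_F :: "'q set \<Rightarrow> 'a set \<Rightarrow> ('q \<Rightarrow> 'a \<Rightarrow> 'q set) \<Rightarrow> 'q set \<Rightarrow> 'q set \<Rightarrow> nat \<Rightarrow>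
    ('q \<times> bool \<Rightarrow> nat) set" where
  "kdis_F Q Sig \<delta> Q0 F k = kdis_F' Q k \<inter> kdis_S Q Sig \<delta> Q0 F k"

end

theory Submission
  imports Defs "HOL-Library.FuncSet" "HOL-Library.Omega_Words_Fun"
begin

section \<open>Truncated paths\<close>

definition trunc :: "nat \<Rightarrow> (nat \<Rightarrow> 'q) \<Rightarrow> nat \<Rightarrow> 'q" where
  "trunc m p = (\<lambda>i. if i \<le> m then p i else undefined)"

lemma trunc_apply [simp]: "i \<le> m \<Longrightarrow> trunc m p i = p i"
  by (simp add: trunc_def)

lemma trunc_trunc: "trunc j (trunc m p) = trunc (min j m) p"
  by (auto simp: trunc_def fun_eq_iff)

lemma trunc_trunc_le [simp]: "j \<le> m \<Longrightarrow> trunc j (trunc m p) = trunc j p"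
  by (simp add: trunc_trunc min_absorb1)

lemma trunc_eq_iff: "trunc m p = trunc m p' \<longleftrightarrow> (\<forall>i\<le>m. p i = p' i)"
  by (auto simp: trunc_def fun_eq_iff)

lemma image_trunc_trunc [simp]: "j \<le> m \<Longrightarrow> trunc j ` trunc m ` T = trunc j ` T"
  by (simp add: image_image)

lemma trunc_fixed_beyond: "trunc N p = p \<Longrightarrow> N < i \<Longrightarrow> p i = undefined"
  by (metis trunc_def not_le)

lemma trunc_fun_upd:
  assumes "trunc N p = p" shows "trunc N (p(Suc N := q)) = p"
  using trunc_fixed_beyond[OF assms] by (auto simp: fun_eq_iff trunc_def)

lemma trunc_Suc_fun_upd:
  assumes "trunc N p = p" shows "trunc (Suc N) (p(Suc N := q)) = p(Suc N := q)"
  using trunc_fixed_beyond[OF assms] by (auto simp: fun_eq_iff trunc_def)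

lemma fun_upd_trunc:
  assumes "trunc (Suc N) p = p" shows "(trunc N p)(Suc N := p (Suc N)) = p"
  using trunc_fixed_beyond[OF assms] by (auto simp: fun_eq_iff trunc_def le_Suc_eq)

lemma inj_on_trunc_eventually:
  assumes "finite S"
  shows "\<exists>m0. \<forall>m\<ge>m0. inj_on (trunc m) S"
proof -
  have "\<forall>p\<in>S. \<forall>p'\<in>S. \<exists>d. p \<noteq> p' \<longrightarrow> p d \<noteq> p' d"
    by (metis ext)
  then obtain d where d: "\<And>p p'. p \<in> S \<Longrightarrow> p' \<in> S \<Longrightarrow> p \<noteq> p' \<Longrightarrow> p (d p p') \<noteq> p' (d p p')"
    by metis
  have "inj_on (trunc m) S" if "m \<ge> Max (case_prod d ` (S \<times> S))" for m
  proof (rule inj_onI)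
    fix p p' assume pp': "p \<in> S" "p' \<in> S" "trunc m p = trunc m p'"
    have "d p p' \<le> Max (case_prod d ` (S \<times> S))"
      using assms pp'(1,2) by (intro Max_ge) auto
    then have "d p p' \<le> m" using that by linarith
    then show "p = p'" using pp' d trunc_eq_iff by blast
  qed
  then show ?thesis by blast
qed

lemma mem_if_truncs_mem:
  assumes "finite S" and "\<forall>j. trunc (N + j) p \<in> trunc (N + j) ` S"
  shows "p \<in> S"
proof -
  obtain m0 where "\<forall>m\<ge>m0. inj_on (trunc m) (insert p S)"
    using inj_on_trunc_eventually[of "insert p S"] assms(1) by blast
  then have "inj_on (trunc (N + m0)) (insert p S)" by simp
  moreover have "trunc (N + m0) p \<in> trunc (N + m0) ` S" using assms(2) by blast
  ultimately show ?thesis by (auto simp: inj_on_def)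
qed

section \<open>Breakpoint flags and the induced states of kdis\<close>

text \<open>The flag of a path p among the paths S records whether p has visited F since the last
  moment at which every path of S was flagged; at such a moment all flags are reset.\<close>

primrec flag :: "'q set \<Rightarrow> (nat \<Rightarrow> 'q) set \<Rightarrow> (nat \<Rightarrow> 'q) \<Rightarrow> nat \<Rightarrow> bool" where
  "flag F S p 0 = False"
| "flag F S p (Suc m) = ((p m \<in> F \<or> flag F S p m) \<and> (\<exists>p'\<in>S. \<not> flag F S p' m))"

lemma flag_cong:
  assumes "trunc m ` S = trunc m ` S'" and "trunc m p = trunc m p'"
  shows "flag F S p m = flag F S' p' m"
  using assms
proof (induction m arbitrary: p p')
  case 0
  then show ?case by simp
next
  case (Suc m)
  have "trunc m ` trunc (Suc m) ` S = trunc m ` trunc (Suc m) ` S'"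
    using Suc.prems(1) by simp
  then have img: "trunc m ` S = trunc m ` S'" by simp
  have IH: "flag F S x m = flag F S' y m" if "trunc m x = trunc m y" for x y
    using Suc.IH[OF img that] .
  have "(\<exists>x\<in>S. \<not> flag F S x m) \<longleftrightarrow> (\<exists>y\<in>S'. \<not> flag F S' y m)"
  proof
    assume "\<exists>x\<in>S. \<not> flag F S x m"
    then obtain x where x: "x \<in> S" "\<not> flag F S x m" by blast
    obtain y where "y \<in> S'" "trunc m x = trunc m y" using img x(1) by (metis imageE imageI)
    then show "\<exists>y\<in>S'. \<not> flag F S' y m" using IH x(2) by blast
  next
    assume "\<exists>y\<in>S'. \<not> flag F S' y m"
    then obtain y where y: "y \<in> S'" "\<not> flag F S' y m" by blast
    obtain x where "x \<in> S" "trunc m x = trunc m y" using img y(1) by (metis imageE imageI)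
    then show "\<exists>x\<in>S. \<not> flag F S x m" using IH y(2) by blast
  qed
  moreover have "p m = p' m" and "trunc m p = trunc m p'"
    using Suc.prems(2) by (auto simp: trunc_eq_iff)
  ultimately show ?case using IH by simp
qed

lemma flag_trunc [simp]: "flag F S (trunc m p) m = flag F S p m"
  by (rule flag_cong) (auto simp: trunc_trunc)

lemma flag_persists:
  assumes "\<forall>i\<ge>n. \<exists>p'\<in>S. \<not> flag F S p' i" and "flag F S p n"
  shows "flag F S p (n + d)"
  using assms by (induction d) auto

lemma visits_F_if_flag_set:
  assumes "\<not> flag F S p n" and "n \<le> m" and "flag F S p m"
  shows "\<exists>j. n \<le> j \<and> j < m \<and> p j \<in> F"
  using assms
proof (induction m)
  case 0
  then show ?case by simp
next
  case (Suc m)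
  show ?case
  proof (cases "n = Suc m")
    case True
    then show ?thesis using Suc.prems by blast
  next
    case False
    then have "n \<le> m" using Suc.prems(2) by simp
    then show ?thesis using Suc by (auto intro: less_SucI)
  qed
qed

text \<open>The state of kdis reached by following the paths S for m steps: the distinct prefixes of
  length m are counted by their last state and their flag.\<close>

definition shape :: "'q set \<Rightarrow> (nat \<Rightarrow> 'q) set \<Rightarrow> nat \<Rightarrow> 'q \<times> bool \<Rightarrow> nat" where
  "shape F S m = (\<lambda>(q, b). card (trunc m ` {p\<in>S. p m = q \<and> flag F S p m = b}))"

lemma shape_eq_card: "shape F S m (q, b) = card {x \<in> trunc m ` S. x m = q \<and> flag F S x m = b}"
proof -
  have "trunc m ` {p\<in>S. p m = q \<and> flag F S p m = b} = {x \<in> trunc m ` S. x m = q \<and> flag F S x m = b}"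
    by force
  then show ?thesis by (simp add: shape_def)
qed

lemma shape_cong: "trunc m ` S = trunc m ` S' \<Longrightarrow> shape F S m = shape F S' m"
  using flag_cong[of m S S'] by (auto simp: fun_eq_iff shape_eq_card intro!: arg_cong[where f = card])

lemma shape_trunc_image: "shape F (trunc m ` S) m = shape F S m"
  by (rule shape_cong) simp

lemma shape_cong_le: "trunc N ` S = T \<Longrightarrow> i \<le> N \<Longrightarrow> shape F S i = shape F T i"
  by (metis image_trunc_trunc shape_cong)

lemma rsize_shape:
  assumes "finite Q" and "finite S" and "\<forall>p\<in>S. p m \<in> Q"
  shows "rsize Q (shape F S m) = card (trunc m ` S)"
proof -
  let ?A = "trunc m ` S" and ?g = "\<lambda>x. (x m, flag F S x m)"
  have "rsize Q (shape F S m) = (\<Sum>y\<in>Q \<times> UNIV. card {x\<in>?A. ?g x = y})"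
    unfolding rsize_def by (intro sum.cong) (auto simp: shape_eq_card)
  also have "\<dots> = (\<Sum>y\<in>Q \<times> UNIV. \<Sum>x\<in>{x\<in>?A. ?g x = y}. 1)"
    by simp
  also have "\<dots> = (\<Sum>x\<in>?A. 1)"
    using assms by (intro sum.group) auto
  also have "\<dots> = card ?A"
    by simp
  finally show ?thesis .
qed

lemma finite_kstates:
  assumes "finite Q"
  shows "finite (kstates Q k)"
proof -
  let ?A = "Q \<times> (UNIV :: bool set) \<rightarrow>\<^sub>E {0..k}"
  have "kstates Q k \<subseteq> (\<lambda>g x. if x \<in> Q \<times> UNIV then g x else 0) ` ?A"
  proof
    fix r assume r: "r \<in> kstates Q k"
    then have "r = (\<lambda>x. if x \<in> Q \<times> UNIV then restrict r (Q \<times> UNIV) x else 0)"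
      by (auto simp: kstates_def fun_eq_iff)
    moreover have "restrict r (Q \<times> UNIV) \<in> ?A" using r by (auto simp: kstates_def)
    ultimately show "r \<in> (\<lambda>g x. if x \<in> Q \<times> UNIV then g x else 0) ` ?A" by blast
  qed
  moreover have "finite ((\<lambda>g x. if x \<in> Q \<times> UNIV then g x else 0) ` ?A)"
    using assms by (intro finite_imageI finite_PiE) auto
  ultimately show ?thesis by (rule finite_subset)
qed

lemma bpp_shape_iff:
  assumes "finite S" and "\<forall>p\<in>S. p N \<in> Q"
  shows "bpp Q (shape F S N) \<longleftrightarrow> (\<exists>p\<in>S. \<not> flag F S p N)"
proof -
  have "shape F S N (q, False) \<noteq> 0 \<longleftrightarrow> (\<exists>p\<in>S. p N = q \<and> \<not> flag F S p N)" for q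
    using assms(1) by (auto simp: shape_def)
  then show ?thesis using assms(2) by (auto simp: bpp_def)
qed

lemma flag_Suc_eq:
  assumes "finite S" and "\<forall>p\<in>S. p N \<in> Q"
  shows "flag F S p (Suc N) \<longleftrightarrow> (p N \<in> F \<or> flag F S p N) \<and> bpp Q (shape F S N)"
  using bpp_shape_iff[OF assms] by simp

definition graft :: "nat \<Rightarrow> ((nat \<Rightarrow> 'q) \<Rightarrow> 'q set) \<Rightarrow> (nat \<Rightarrow> 'q) set \<Rightarrow> (nat \<Rightarrow> 'q) set" where
  "graft N c T = (\<lambda>(p, q). p(Suc N := q)) ` Sigma T c"

lemma trunc_image_graft:
  assumes "\<forall>p\<in>T. trunc N p = p" and "\<forall>p\<in>T. c p \<noteq> {}"
  shows "trunc N ` graft N c T = T"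
proof
  show "trunc N ` graft N c T \<subseteq> T"
    using assms(1) by (auto simp: graft_def trunc_fun_upd)
  show "T \<subseteq> trunc N ` graft N c T"
  proof
    fix p assume p: "p \<in> T"
    then obtain q where "q \<in> c p" using assms(2) by blast
    then have "p(Suc N := q) \<in> graft N c T" using p by (force simp: graft_def)
    moreover have "trunc N (p(Suc N := q)) = p" using assms(1) p by (simp add: trunc_fun_upd)
    ultimately show "p \<in> trunc N ` graft N c T" by force
  qed
qed

lemma graft_successors:
  assumes "\<forall>x\<in>T'. trunc (Suc N) x = x" and "trunc N ` T' = T"
  shows "graft N (\<lambda>p. {q. p(Suc N := q) \<in> T'}) T = T'"
proof
  show "graft N (\<lambda>p. {q. p(Suc N := q) \<in> T'}) T \<subseteq> T'"
    by (auto simp: graft_def)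
  show "T' \<subseteq> graft N (\<lambda>p. {q. p(Suc N := q) \<in> T'}) T"
  proof
    fix x assume x: "x \<in> T'"
    then have "x = (trunc N x)(Suc N := x (Suc N))" and "trunc N x \<in> T"
      using assms fun_upd_trunc[of N x] by auto
    then show "x \<in> graft N (\<lambda>p. {q. p(Suc N := q) \<in> T'}) T"
      unfolding graft_def using x by (intro image_eqI[where x = "(trunc N x, x (Suc N))"]) auto
  qed
qed

lemma successors_graft:
  assumes "\<forall>p\<in>T. trunc N p = p" and "p \<in> T"
  shows "{q. p(Suc N := q) \<in> graft N c T} = c p"
proof -
  have "p = p'" if "p' \<in> T" and "p(Suc N := q) = p'(Suc N := q')" for p' q q'
    using that assms trunc_fun_upd by metis
  moreover have "q = q'" if "p(Suc N := q) = p'(Suc N := q')" for p' q q'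
    using that by (metis fun_upd_same)
  ultimately show ?thesis using assms(2) by (auto simp: graft_def) metis
qed

lemma card_filter_bij_betw:
  assumes "bij_betw \<phi> D T"
  shows "card {x\<in>D. P (\<phi> x)} = card {p\<in>T. P p}"
proof -
  have "bij_betw \<phi> {x\<in>D. P (\<phi> x)} {p\<in>T. P p}"
    using assms by (auto simp: bij_betw_def inj_on_def)
  then show ?thesis by (rule bij_betw_same_card)
qed

lemma card_choice_functions_relabel:
  assumes \<phi>: "bij_betw \<phi> D T"
  shows "card {c. (\<forall>p. p \<notin> T \<longrightarrow> c p = z) \<and> (\<forall>p\<in>T. A p (c p)) \<and>
                  (\<forall>y\<in>Y. card {p\<in>T. R p (c p) y} = n y)} =
         card {f. (\<forall>x. x \<notin> D \<longrightarrow> f x = z) \<and> (\<forall>x\<in>D. A (\<phi> x) (f x)) \<and>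
                  (\<forall>y\<in>Y. card {x\<in>D. R (\<phi> x) (f x) y} = n y)}"
    (is "card ?C = card ?F")
proof -
  let ?\<psi> = "inv_into D \<phi>"
  have \<psi>: "?\<psi> p \<in> D" "\<phi> (?\<psi> p) = p" if "p \<in> T" for p
    using that \<phi> bij_betw_inv_into_right[OF \<phi>] bij_betw_apply[OF bij_betw_inv_into[OF \<phi>]] by auto
  have \<phi>': "\<phi> x \<in> T" "?\<psi> (\<phi> x) = x" if "x \<in> D" for x
    using that \<phi> bij_betw_inv_into_left[OF \<phi>] bij_betw_apply[OF \<phi>] by auto
  define lab where "lab c = (\<lambda>x. if x \<in> D then c (\<phi> x) else z)" for c :: "'b \<Rightarrow> 'c"
  define unlab where "unlab f = (\<lambda>p. if p \<in> T then f (?\<psi> p) else z)" for f :: "'a \<Rightarrow> 'c"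
  have "bij_betw lab ?C ?F"
  proof (rule bij_betw_byWitness[where f' = unlab])
    show "\<forall>c\<in>?C. unlab (lab c) = c"
      using \<psi> by (auto simp: lab_def unlab_def fun_eq_iff)
    show "\<forall>f\<in>?F. lab (unlab f) = f"
      using \<phi>' by (auto simp: lab_def unlab_def fun_eq_iff)
    have "card {x\<in>D. R (\<phi> x) (lab c x) y} = card {p\<in>T. R p (c p) y}" for c y
      using card_filter_bij_betw[OF \<phi>, of "\<lambda>p. R p (c p) y"] by (simp add: lab_def cong: conj_cong)
    then show "lab ` ?C \<subseteq> ?F"
      using \<phi>' by (auto simp: lab_def)
    have "card {p\<in>T. R p (unlab f p) y} = card {x\<in>D. R (\<phi> x) (f x) y}" for f y
      using card_filter_bij_betw[OF \<phi>, of "\<lambda>p. R p (unlab f p) y"] \<phi>'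
      by (simp add: unlab_def cong: conj_cong)
    then show "unlab ` ?F \<subseteq> ?C"
      using \<psi> by (auto simp: unlab_def) metis
  qed
  then show ?thesis by (rule bij_betw_same_card)
qed

lemma ex_bij_betw_enumeration:
  assumes "finite T" and "\<forall>p\<in>T. g p \<in> Y"
  defines "D \<equiv> {(u, v, i). (u, v) \<in> Y \<and> i \<in> {1..card {p\<in>T. g p = (u, v)}}}"
  obtains \<phi> where "bij_betw \<phi> D T" and "\<forall>(u, v, i)\<in>D. g (\<phi> (u, v, i)) = (u, v)"
proof -
  have "\<exists>e. bij_betw e {1..card {p\<in>T. g p = y}} {p\<in>T. g p = y}" for y
    using assms(1) by (intro ex_bij_betw_nat_finite_1) simp
  then obtain e where e: "\<And>y. bij_betw (e y) {1..card {p\<in>T. g p = y}} {p\<in>T. g p = y}"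
    by metis
  define \<phi> where "\<phi> = (\<lambda>(u, v, i). e (u, v) i)"
  have in_class: "\<phi> (u, v, i) \<in> T \<and> g (\<phi> (u, v, i)) = (u, v)" if "(u, v, i) \<in> D" for u v i
    using that bij_betw_apply[OF e] by (fastforce simp: D_def \<phi>_def)
  have "inj_on \<phi> D"
  proof (rule inj_onI)
    fix x x' assume xx': "x \<in> D" "x' \<in> D" "\<phi> x = \<phi> x'"
    obtain u v i u' v' i' where x: "x = (u, v, i)" and x': "x' = (u', v', i')"
      by (cases x, cases x') auto
    have "(u, v) = (u', v')" using in_class xx' x x' by metis
    then show "x = x'"
      using xx' x x' bij_betw_imp_inj_on[OF e] by (auto simp: D_def \<phi>_def inj_on_def)
  qed
  moreover have "\<phi> ` D = T"
  proof
    show "\<phi> ` D \<subseteq> T" using in_class by auto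
    show "T \<subseteq> \<phi> ` D"
    proof
      fix p assume p: "p \<in> T"
      obtain u v where uv: "g p = (u, v)" by force
      then have "p \<in> e (u, v) ` {1..card {p\<in>T. g p = (u, v)}}"
        using p bij_betw_imp_surj_on[OF e] by blast
      then show "p \<in> \<phi> ` D" using uv p assms(2) by (force simp: D_def \<phi>_def)
    qed
  qed
  ultimately show ?thesis using that in_class by (auto simp: bij_betw_def)
qed

lemma kdis_w_alt:
  fixes Q :: "'q set" and r :: "'q \<times> bool \<Rightarrow> nat"
  assumes "\<forall>x. r x \<le> k"
  defines "D \<equiv> {(q, b, i). q \<in> Q \<and> 1 \<le> i \<and> i \<le> r (q, b)}"
  shows "kdis_w Q \<delta> F k r a r' = card {f.
     (\<forall>x. x \<notin> D \<longrightarrow> f x = {}) \<and>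
     (\<forall>(q, b, i)\<in>D. f (q, b, i) \<noteq> {} \<and> f (q, b, i) \<subseteq> \<delta> q a) \<and>
     (\<forall>q'\<in>Q. \<forall>b'. card {(q, b, i). (q, b, i) \<in> D \<and> q' \<in> f (q, b, i) \<and>
                                  b' = ((q \<in> F \<or> b) \<and> bpp Q r)} = r' (q', b'))}"
proof -
  have D_sub: "D \<subseteq> Q \<times> UNIV \<times> {1..k}"
    using assms(1) by (force simp: D_def intro: le_trans)
  have vanish: "(\<forall>x. x \<notin> Q \<times> UNIV \<times> {1..k} \<longrightarrow> f x = {}) \<and>
      (\<forall>q\<in>Q. \<forall>b. \<forall>i\<in>{1..k}. (i > r (q, b) \<longrightarrow> f (q, b, i) = {}) \<and>
                              (i \<le> r (q, b) \<longrightarrow> f (q, b, i) \<noteq> {} \<and> f (q, b, i) \<subseteq> \<delta> q a))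
    \<longleftrightarrow> (\<forall>x. x \<notin> D \<longrightarrow> f x = {}) \<and> (\<forall>(q, b, i)\<in>D. f (q, b, i) \<noteq> {} \<and> f (q, b, i) \<subseteq> \<delta> q a)"
    (is "?K1 \<and> ?K2 \<longleftrightarrow> ?R1 \<and> ?R2") for f :: "'q \<times> bool \<times> nat \<Rightarrow> 'q set"
  proof
    assume K: "?K1 \<and> ?K2"
    have "f (q, b, i) = {}" if "(q, b, i) \<notin> D" for q b i
      using K that by (cases "(q, b, i) \<in> Q \<times> UNIV \<times> {1..k}") (auto simp: D_def)
    moreover have "?R2"
    proof (intro ballI)
      fix x assume x: "x \<in> D"
      obtain q b i where qbi: "x = (q, b, i)" by (cases x)
      have "q \<in> Q" "i \<in> {1..k}" "i \<le> r (q, b)" using x qbi D_sub by (auto simp: D_def)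
      then show "case x of (q, b, i) \<Rightarrow> f (q, b, i) \<noteq> {} \<and> f (q, b, i) \<subseteq> \<delta> q a"
        using K qbi by simp
    qed
    ultimately show "?R1 \<and> ?R2" by auto
  next
    assume R: "?R1 \<and> ?R2"
    then have "?K1" using D_sub by blast
    moreover have "?K2" using R by (auto simp: D_def)
    ultimately show "?K1 \<and> ?K2" ..
  qed
  have count: "{(q, b, i). (q, b, i) \<in> Q \<times> UNIV \<times> {1..k} \<and> q' \<in> f (q, b, i) \<and> b' = ((q \<in> F \<or> b) \<and> bpp Q r)}
      = {(q, b, i). (q, b, i) \<in> D \<and> q' \<in> f (q, b, i) \<and> b' = ((q \<in> F \<or> b) \<and> bpp Q r)}"
    if "\<forall>x. x \<notin> D \<longrightarrow> f x = {}" for f :: "'q \<times> bool \<times> nat \<Rightarrow> 'q set" and q' b'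
  proof (rule set_eqI)
    fix x :: "'q \<times> bool \<times> nat"
    obtain q b i where x: "x = (q, b, i)" by (cases x)
    have A: "(q, b, i) \<in> D \<Longrightarrow> (q, b, i) \<in> Q \<times> UNIV \<times> {1..k}"
      using D_sub by blast
    have B: "q' \<in> f (q, b, i) \<Longrightarrow> (q, b, i) \<in> D"
      using that by blast
    then show "x \<in> {(q, b, i). (q, b, i) \<in> Q \<times> UNIV \<times> {1..k} \<and> q' \<in> f (q, b, i) \<and> b' = ((q \<in> F \<or> b) \<and> bpp Q r)}
      \<longleftrightarrow> x \<in> {(q, b, i). (q, b, i) \<in> D \<and> q' \<in> f (q, b, i) \<and> b' = ((q \<in> F \<or> b) \<and> bpp Q r)}"
      unfolding x mem_Collect_eq case_prod_conv using A B by blast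
  qed
  show ?thesis
    unfolding kdis_w_def
  proof (intro arg_cong[where f = card] Collect_cong)
    fix f :: "'q \<times> bool \<times> nat \<Rightarrow> 'q set"
    show "(\<forall>x. x \<notin> Q \<times> UNIV \<times> {1..k} \<longrightarrow> f x = {}) \<and>
      (\<forall>q\<in>Q. \<forall>b. \<forall>i\<in>{1..k}. (i > r (q, b) \<longrightarrow> f (q, b, i) = {}) \<and>
                              (i \<le> r (q, b) \<longrightarrow> f (q, b, i) \<noteq> {} \<and> f (q, b, i) \<subseteq> \<delta> q a)) \<and>
      (\<forall>q'\<in>Q. \<forall>b'. card {(q, b, i). (q, b, i) \<in> Q \<times> UNIV \<times> {1..k} \<and> q' \<in> f (q, b, i) \<and>
                          b' = ((q \<in> F \<or> b) \<and> bpp Q r)} = r' (q', b'))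
      \<longleftrightarrow> (\<forall>x. x \<notin> D \<longrightarrow> f x = {}) \<and>
      (\<forall>(q, b, i)\<in>D. f (q, b, i) \<noteq> {} \<and> f (q, b, i) \<subseteq> \<delta> q a) \<and>
      (\<forall>q'\<in>Q. \<forall>b'. card {(q, b, i). (q, b, i) \<in> D \<and> q' \<in> f (q, b, i) \<and>
                                  b' = ((q \<in> F \<or> b) \<and> bpp Q r)} = r' (q', b'))"
      unfolding conj_assoc[symmetric] vanish
    proof (rule conj_cong[OF refl], goal_cases)
      case 1
      then have "\<forall>x. x \<notin> D \<longrightarrow> f x = {}" by blast
      then show ?case using count by (simp only: conj_assoc[symmetric])
    qed
  qed
qed

locale nba_kdis =
  fixes Q :: "'q set" and Sig :: "'a set" and \<delta> :: "'q \<Rightarrow> 'a \<Rightarrow> 'q set"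
    and Q0 F :: "'q set" and k :: nat
  assumes nba: "nba Q Sig \<delta> Q0 F"
begin

lemma finite_Q: "finite Q" and Q0_subset: "Q0 \<subseteq> Q"
  and \<delta>_subset: "q \<in> Q \<Longrightarrow> a \<in> Sig \<Longrightarrow> \<delta> q a \<subseteq> Q"
  using nba by (auto simp: nba_def)

lemma nba_path_in_Q:
  assumes "word Sig W" and "nba_path \<delta> Q0 W p"
  shows "p i \<in> Q"
proof (induction i)
  case 0
  then show ?case using assms(2) Q0_subset by (auto simp: nba_path_def)
next
  case (Suc i)
  then show ?case using assms \<delta>_subset[of "p i" "W i"] by (auto simp: nba_path_def word_def)
qed

definition forest :: "(nat \<Rightarrow> 'a) \<Rightarrow> nat \<Rightarrow> (nat \<Rightarrow> 'q) set \<Rightarrow> bool" where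
  "forest W N T \<longleftrightarrow> finite T \<and>
     (\<forall>p\<in>T. trunc N p = p \<and> p 0 \<in> Q0 \<and> (\<forall>i<N. p (Suc i) \<in> \<delta> (p i) (W i)))"

lemma forest_finite: "forest W N T \<Longrightarrow> finite T"
  and forest_trunc: "forest W N T \<Longrightarrow> p \<in> T \<Longrightarrow> trunc N p = p"
  by (auto simp: forest_def)

lemma forest_image_trunc: "forest W N T \<Longrightarrow> trunc N ` T = T"
  by (force simp: forest_trunc)

lemma forest_in_Q:
  assumes "word Sig W" and "forest W N T" and "p \<in> T" and "i \<le> N"
  shows "p i \<in> Q"
  using assms(4)
proof (induction i)
  case 0
  then show ?case using assms(2,3) Q0_subset by (auto simp: forest_def)
next
  case (Suc i)
  then have "p (Suc i) \<in> \<delta> (p i) (W i)" using assms(2,3) by (auto simp: forest_def)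
  then show ?case using Suc assms(1) \<delta>_subset by (auto simp: word_def)
qed

lemma forest_trunc_image:
  assumes "finite S" and "\<forall>p\<in>S. nba_path \<delta> Q0 W p"
  shows "forest W m (trunc m ` S)"
  using assms by (auto simp: forest_def nba_path_def trunc_trunc)

definition next_flag :: "(nat \<Rightarrow> 'q) set \<Rightarrow> nat \<Rightarrow> (nat \<Rightarrow> 'q) \<Rightarrow> bool" where
  "next_flag T N p \<longleftrightarrow> (p N \<in> F \<or> flag F T p N) \<and> bpp Q (shape F T N)"

lemma graft_forest:
  assumes W: "word Sig W" and T: "forest W N T" and c: "\<forall>p\<in>T. c p \<subseteq> \<delta> (p N) (W N)"
  shows "forest W (Suc N) (graft N c T)"
proof -
  have "finite (c p)" if "p \<in> T" for p
    using c that forest_in_Q[OF W T that, of N] W \<delta>_subset finite_Q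
    by (meson finite_subset le_refl word_def)
  then have "finite (graft N c T)"
    using forest_finite[OF T] by (auto simp: graft_def)
  moreover have "trunc (Suc N) x = x \<and> x 0 \<in> Q0 \<and> (\<forall>i<Suc N. x (Suc i) \<in> \<delta> (x i) (W i))"
    if "x \<in> graft N c T" for x
    using that T c by (auto simp: graft_def forest_def trunc_Suc_fun_upd less_Suc_eq) blast
  ultimately show ?thesis by (simp add: forest_def)
qed

lemma flag_graft:
  assumes W: "word Sig W" and T: "forest W N T"
    and c: "\<forall>p\<in>T. c p \<noteq> {}" "\<forall>p\<in>T. c p \<subseteq> \<delta> (p N) (W N)" and p: "p \<in> T"
  shows "flag F (graft N c T) (p(Suc N := q)) (Suc N) = next_flag T N p"
proof -
  let ?T' = "graft N c T"
  have T': "forest W (Suc N) ?T'" by (rule graft_forest[OF W T c(2)])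
  have img: "trunc N ` ?T' = trunc N ` T"
    using trunc_image_graft[OF _ c(1)] forest_trunc[OF T] forest_image_trunc[OF T] by auto
  have "flag F ?T' (p(Suc N := q)) N = flag F T p N"
    using flag_cong[OF img] trunc_fun_upd[OF forest_trunc[OF T p]] forest_trunc[OF T p] by metis
  moreover have "shape F ?T' N = shape F T N" by (rule shape_cong[OF img])
  moreover have "\<forall>x\<in>?T'. x N \<in> Q" using forest_in_Q[OF W T'] by simp
  ultimately show ?thesis
    using flag_Suc_eq[OF forest_finite[OF T'], of N Q F "p(Suc N := q)"] by (simp add: next_flag_def)
qed

end

context nba_kdis
begin

lemma shape_graft:
  assumes W: "word Sig W" and T: "forest W N T"
    and c: "\<forall>p\<in>T. c p \<noteq> {}" "\<forall>p\<in>T. c p \<subseteq> \<delta> (p N) (W N)"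
  shows "shape F (graft N c T) (Suc N) (q', b') = card {p\<in>T. q' \<in> c p \<and> b' = next_flag T N p}"
proof -
  let ?T' = "graft N c T" and ?A = "{p\<in>T. q' \<in> c p \<and> b' = next_flag T N p}"
  have img: "trunc (Suc N) ` ?T' = ?T'"
    by (rule forest_image_trunc[OF graft_forest[OF W T c(2)]])
  have "{x\<in>?T'. x (Suc N) = q' \<and> flag F ?T' x (Suc N) = b'} = (\<lambda>p. p(Suc N := q')) ` ?A"
  proof
    show "{x\<in>?T'. x (Suc N) = q' \<and> flag F ?T' x (Suc N) = b'} \<subseteq> (\<lambda>p. p(Suc N := q')) ` ?A"
    proof
      fix x assume x: "x \<in> {x\<in>?T'. x (Suc N) = q' \<and> flag F ?T' x (Suc N) = b'}"
      then obtain p q where pq: "p \<in> T" "q \<in> c p" "x = p(Suc N := q)" by (auto simp: graft_def)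
      then have "q = q'" and "next_flag T N p = b'" using x flag_graft[OF W T c pq(1)] by auto
      then show "x \<in> (\<lambda>p. p(Suc N := q')) ` ?A" using pq by blast
    qed
    show "(\<lambda>p. p(Suc N := q')) ` ?A \<subseteq> {x\<in>?T'. x (Suc N) = q' \<and> flag F ?T' x (Suc N) = b'}"
      using flag_graft[OF W T c] by (force simp: graft_def)
  qed
  moreover have "inj_on (\<lambda>p. p(Suc N := q')) ?A"
    using trunc_fun_upd[OF forest_trunc[OF T]] by (intro inj_onI) (metis (no_types, lifting) mem_Collect_eq)
  ultimately show ?thesis
    using shape_eq_card[of F ?T' "Suc N" q' b'] by (simp add: img card_image)
qed

definition successor_choices ::
    "(nat \<Rightarrow> 'a) \<Rightarrow> nat \<Rightarrow> (nat \<Rightarrow> 'q) set \<Rightarrow> ('q \<times> bool \<Rightarrow> nat) \<Rightarrow> ((nat \<Rightarrow> 'q) \<Rightarrow> 'q set) set" where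
  "successor_choices W N T r' = {c. (\<forall>p. p \<notin> T \<longrightarrow> c p = {}) \<and>
     (\<forall>p\<in>T. c p \<noteq> {} \<and> c p \<subseteq> \<delta> (p N) (W N)) \<and>
     (\<forall>y\<in>Q \<times> UNIV. card {p\<in>T. fst y \<in> c p \<and> snd y = next_flag T N p} = r' y)}"

definition extensions ::
    "(nat \<Rightarrow> 'a) \<Rightarrow> nat \<Rightarrow> (nat \<Rightarrow> 'q) set \<Rightarrow> ('q \<times> bool \<Rightarrow> nat) \<Rightarrow> (nat \<Rightarrow> 'q) set set" where
  "extensions W N T r' = {T'. forest W (Suc N) T' \<and> trunc N ` T' = T \<and> shape F T' (Suc N) = r'}"

lemma graft_cong: "(\<And>p. p \<in> T \<Longrightarrow> c p = c' p) \<Longrightarrow> graft N c T = graft N c' T"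
  by (auto simp: graft_def)

lemma bij_betw_graft_extensions:
  assumes W: "word Sig W" and T: "forest W N T" and r': "r' \<in> kstates Q k"
  shows "bij_betw (\<lambda>c. graft N c T) (successor_choices W N T r') (extensions W N T r')"
proof -
  define succs where "succs T' p = (if p \<in> T then {q. p(Suc N := q) \<in> T'} else {})" for T' p
  have Tfix: "\<forall>p\<in>T. trunc N p = p" using forest_trunc[OF T] by blast
  have regraft: "graft N (succs T') T = T'" if "T' \<in> extensions W N T r'" for T'
  proof -
    have "\<forall>x\<in>T'. trunc (Suc N) x = x" and "trunc N ` T' = T"
      using that forest_trunc by (auto simp: extensions_def)
    then have "graft N (\<lambda>p. {q. p(Suc N := q) \<in> T'}) T = T'" by (rule graft_successors)
    then show ?thesis using graft_cong[of T "succs T'"] by (simp add: succs_def)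
  qed
  show ?thesis
  proof (rule bij_betw_byWitness[where f' = succs])
    show "\<forall>c\<in>successor_choices W N T r'. succs (graft N c T) = c"
      using successors_graft[OF Tfix] by (auto simp: successor_choices_def succs_def fun_eq_iff)
    show "\<forall>T'\<in>extensions W N T r'. graft N (succs T') T = T'"
      using regraft by blast
    show "(\<lambda>c. graft N c T) ` successor_choices W N T r' \<subseteq> extensions W N T r'"
    proof (intro image_subsetI)
      fix c assume "c \<in> successor_choices W N T r'"
      then have c: "\<forall>p\<in>T. c p \<noteq> {}" "\<forall>p\<in>T. c p \<subseteq> \<delta> (p N) (W N)"
        and count: "\<And>y. y \<in> Q \<times> UNIV \<Longrightarrow> card {p\<in>T. fst y \<in> c p \<and> snd y = next_flag T N p} = r' y"
        by (auto simp: successor_choices_def)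
      have "shape F (graft N c T) (Suc N) (q', b') = r' (q', b')" for q' b'
      proof (cases "q' \<in> Q")
        case True
        then show ?thesis using shape_graft[OF W T c] count[of "(q', b')"] by simp
      next
        case False
        have "c p \<subseteq> Q" if "p \<in> T" for p
        proof -
          have "\<delta> (p N) (W N) \<subseteq> Q"
            using \<delta>_subset[OF forest_in_Q[OF W T that le_refl]] W by (simp add: word_def)
          then show ?thesis using c(2) that by blast
        qed
        then have "{p\<in>T. q' \<in> c p \<and> b' = next_flag T N p} = {}" using False by blast
        then have "shape F (graft N c T) (Suc N) (q', b') = 0"
          by (simp only: shape_graft[OF W T c] card.empty)
        then show ?thesis using False r' by (simp add: kstates_def)
      qed
      then show "graft N c T \<in> extensions W N T r'"
        using graft_forest[OF W T c(2)] trunc_image_graft[OF Tfix c(1)]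
        by (auto simp: extensions_def)
    qed
    show "succs ` extensions W N T r' \<subseteq> successor_choices W N T r'"
    proof (intro image_subsetI)
      fix T' assume T': "T' \<in> extensions W N T r'"
      have FT': "forest W (Suc N) T'" and img: "trunc N ` T' = T" and shT': "shape F T' (Suc N) = r'"
        using T' by (auto simp: extensions_def)
      have ne: "\<forall>p\<in>T. succs T' p \<noteq> {}"
      proof
        fix p assume "p \<in> T"
        then obtain x where x: "x \<in> T'" "p = trunc N x" using img by blast
        then have "x = p(Suc N := x (Suc N))" using fun_upd_trunc[OF forest_trunc[OF FT' x(1)]] by simp
        then have "x (Suc N) \<in> succs T' p" using x \<open>p \<in> T\<close> by (simp add: succs_def)
        then show "succs T' p \<noteq> {}" by blast
      qed
      have sub: "\<forall>p\<in>T. succs T' p \<subseteq> \<delta> (p N) (W N)"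
      proof (intro ballI subsetI)
        fix p q assume "p \<in> T" "q \<in> succs T' p"
        then have "p(Suc N := q) \<in> T'" by (simp add: succs_def)
        then show "q \<in> \<delta> (p N) (W N)" using FT' unfolding forest_def by fastforce
      qed
      have "card {p\<in>T. fst y \<in> succs T' p \<and> snd y = next_flag T N p} = r' y" for y
        using shape_graft[OF W T ne sub, of "fst y" "snd y"] regraft[OF T'] shT' by simp
      moreover have "\<forall>p. p \<notin> T \<longrightarrow> succs T' p = {}" by (simp add: succs_def)
      ultimately show "succs T' \<in> successor_choices W N T r'"
        using ne sub unfolding successor_choices_def by blast
    qed
  qed
qed

lemma card_extensions:
  assumes W: "word Sig W" and T: "forest W N T"
    and r: "shape F T N \<in> kstates Q k" and r': "r' \<in> kstates Q k"
  shows "card (extensions W N T r') = kdis_w Q \<delta> F k (shape F T N) (W N) r'"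
proof -
  define r where "r = shape F T N"
  define g where "g p = (p N, flag F T p N)" for p :: "nat \<Rightarrow> 'q"
  have classes: "card {p\<in>T. g p = (q, b)} = r (q, b)" for q b
    using shape_eq_card[of F T N q b] forest_image_trunc[OF T] by (simp add: r_def g_def)
  define D where "D = {(q, b, i). (q, b) \<in> Q \<times> UNIV \<and> i \<in> {1..card {p\<in>T. g p = (q, b)}}}"
  obtain \<phi> where \<phi>: "bij_betw \<phi> D T" and g\<phi>: "\<forall>(q, b, i)\<in>D. g (\<phi> (q, b, i)) = (q, b)"
    using ex_bij_betw_enumeration[of T g "Q \<times> UNIV"] forest_finite[OF T] forest_in_Q[OF W T]
    unfolding D_def g_def by auto
  have D_eq: "D = {(q, b, i). q \<in> Q \<and> 1 \<le> i \<and> i \<le> r (q, b)}"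
    using classes by (auto simp: D_def)
  have labels: "\<phi> x N = fst x" "next_flag T N (\<phi> x) = ((fst x \<in> F \<or> fst (snd x)) \<and> bpp Q r)"
    if "x \<in> D" for x
    using that g\<phi> by (auto simp: g_def next_flag_def r_def)
  have "card (extensions W N T r') = card (successor_choices W N T r')"
    using bij_betw_same_card[OF bij_betw_graft_extensions[OF W T r']] by simp
  also have "\<dots> = card {f. (\<forall>x. x \<notin> D \<longrightarrow> f x = {}) \<and> (\<forall>x\<in>D. f x \<noteq> {} \<and> f x \<subseteq> \<delta> (\<phi> x N) (W N)) \<and>
      (\<forall>y\<in>Q \<times> UNIV. card {x\<in>D. fst y \<in> f x \<and> snd y = next_flag T N (\<phi> x)} = r' y)}"
    unfolding successor_choices_def by (rule card_choice_functions_relabel[OF \<phi>])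
  also have "\<dots> = kdis_w Q \<delta> F k r (W N) r'"
  proof -
    have rk: "\<forall>x. r x \<le> k" using r by (simp add: kstates_def r_def)
    have A: "(\<forall>x\<in>D. f x \<noteq> {} \<and> f x \<subseteq> \<delta> (\<phi> x N) (W N)) \<longleftrightarrow>
        (\<forall>(q, b, i)\<in>D. f (q, b, i) \<noteq> {} \<and> f (q, b, i) \<subseteq> \<delta> q (W N))" for f :: "_ \<Rightarrow> 'q set"
      using labels(1) by (simp add: split_beta cong: ball_cong)
    have B: "{x\<in>D. q' \<in> f x \<and> b' = next_flag T N (\<phi> x)} =
        {(q, b, i). (q, b, i) \<in> D \<and> q' \<in> f (q, b, i) \<and> b' = ((q \<in> F \<or> b) \<and> bpp Q r)}"
      for f :: "_ \<Rightarrow> 'q set" and q' b'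
      using labels(2) by auto
    have C: "(\<forall>y\<in>Q \<times> UNIV. P y) \<longleftrightarrow> (\<forall>q'\<in>Q. \<forall>b'. P (q', b'))" for P :: "'q \<times> bool \<Rightarrow> bool"
      by auto
    show ?thesis
      unfolding kdis_w_alt[OF rk] D_eq[symmetric]
      by (intro arg_cong[where f = card] Collect_cong) (simp only: A B C fst_conv snd_conv)
  qed
  finally show ?thesis by (simp add: r_def)
qed

end

context nba_kdis
begin

lemma forest_image_trunc_le:
  assumes "forest W M T" and "n \<le> M"
  shows "forest W n (trunc n ` T)"
  using assms by (auto simp: forest_def trunc_trunc min_absorb1)

lemma finite_extensions:
  assumes W: "word Sig W" and T: "forest W N T"
  shows "finite (extensions W N T r')"
proof -
  have "extensions W N T r' \<subseteq> Pow (graft N (\<lambda>_. Q) T)"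
  proof
    fix T' assume "T' \<in> extensions W N T r'"
    then have FT': "forest W (Suc N) T'" and img: "trunc N ` T' = T"
      by (auto simp: extensions_def)
    have "T' \<subseteq> graft N (\<lambda>_. Q) T"
    proof
      fix x assume x: "x \<in> T'"
      have "x = (trunc N x)(Suc N := x (Suc N))"
        using fun_upd_trunc[OF forest_trunc[OF FT' x]] by simp
      moreover have "trunc N x \<in> T" using img x by blast
      moreover have "x (Suc N) \<in> Q" using forest_in_Q[OF W FT' x] by simp
      ultimately show "x \<in> graft N (\<lambda>_. Q) T"
        unfolding graft_def by (intro image_eqI[where x = "(trunc N x, x (Suc N))"]) auto
    qed
    then show "T' \<in> Pow (graft N (\<lambda>_. Q) T)" by simp
  qed
  moreover have "finite (graft N (\<lambda>_. Q) T)"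
    using forest_finite[OF T] finite_Q by (simp add: graft_def)
  ultimately show ?thesis by (meson finite_Pow_iff finite_subset)
qed

definition forests_along ::
    "(nat \<Rightarrow> 'a) \<Rightarrow> (nat \<Rightarrow> 'q \<times> bool \<Rightarrow> nat) \<Rightarrow> (nat \<Rightarrow> 'q) set \<Rightarrow> nat \<Rightarrow> nat \<Rightarrow> (nat \<Rightarrow> 'q) set set" where
  "forests_along W \<rho> T N j = {T'. forest W (N + j) T' \<and> trunc N ` T' = T \<and>
     (\<forall>i. N \<le> i \<longrightarrow> i \<le> N + j \<longrightarrow> shape F T' i = \<rho> i)}"

lemma forests_along_0:
  assumes "forest W N T" and "shape F T N = \<rho> N"
  shows "forests_along W \<rho> T N 0 = {T}"
  using assms forest_image_trunc[of W N] by (auto simp: forests_along_def)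

lemma forests_along_Suc:
  "forests_along W \<rho> T N (Suc j) =
     (\<Union>T1\<in>forests_along W \<rho> T N j. extensions W (N + j) T1 (\<rho> (Suc (N + j))))"
proof
  show "forests_along W \<rho> T N (Suc j) \<subseteq> (\<Union>T1\<in>forests_along W \<rho> T N j. extensions W (N + j) T1 (\<rho> (Suc (N + j))))"
  proof
    fix T' assume T': "T' \<in> forests_along W \<rho> T N (Suc j)"
    let ?T1 = "trunc (N + j) ` T'"
    have "forest W (N + j) ?T1"
      using T' forest_image_trunc_le[of W "Suc (N + j)" T' "N + j"] by (simp add: forests_along_def)
    moreover have "trunc N ` ?T1 = T"
      using T' by (simp add: forests_along_def)
    moreover have "shape F ?T1 i = \<rho> i" if "N \<le> i" "i \<le> N + j" for i
      using T' that shape_cong_le[of "N + j" T' ?T1 i F] by (simp add: forests_along_def)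
    ultimately have "?T1 \<in> forests_along W \<rho> T N j" by (auto simp: forests_along_def)
    moreover have "T' \<in> extensions W (N + j) ?T1 (\<rho> (Suc (N + j)))"
      using T' by (auto simp: forests_along_def extensions_def)
    ultimately show "T' \<in> (\<Union>T1\<in>forests_along W \<rho> T N j. extensions W (N + j) T1 (\<rho> (Suc (N + j))))"
      by blast
  qed
  show "(\<Union>T1\<in>forests_along W \<rho> T N j. extensions W (N + j) T1 (\<rho> (Suc (N + j)))) \<subseteq> forests_along W \<rho> T N (Suc j)"
  proof (intro UN_least subsetI)
    fix T1 T' assume T1: "T1 \<in> forests_along W \<rho> T N j" and T': "T' \<in> extensions W (N + j) T1 (\<rho> (Suc (N + j)))"
    then have img: "trunc (N + j) ` T' = T1" by (simp add: extensions_def)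
    have "trunc N ` T' = T"
      using T1 image_trunc_trunc[of N "N + j" T'] by (simp add: img forests_along_def)
    moreover have "shape F T' i = \<rho> i" if "N \<le> i" "i \<le> N + Suc j" for i
    proof (cases "i = Suc (N + j)")
      case True
      then show ?thesis using T' by (simp add: extensions_def)
    next
      case False
      then show ?thesis
        using T1 that shape_cong_le[OF img, of i] by (simp add: forests_along_def)
    qed
    ultimately show "T' \<in> forests_along W \<rho> T N (Suc j)"
      using T' by (simp add: forests_along_def extensions_def)
  qed
qed

lemma card_forests_along:
  assumes W: "word Sig W" and T: "forest W N T" and sT: "shape F T N = \<rho> N"
    and ks: "\<And>i. \<rho> i \<in> kstates Q k"
  shows "finite (forests_along W \<rho> T N j) \<and>
    card (forests_along W \<rho> T N j) = (\<Prod>n<j. kdis_w Q \<delta> F k (\<rho> (N + n)) (W (N + n)) (\<rho> (Suc (N + n))))"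
proof (induction j)
  case 0
  then show ?case using forests_along_0[of W N T \<rho>] T sT by simp
next
  case (Suc j)
  let ?w = "kdis_w Q \<delta> F k (\<rho> (N + j)) (W (N + j)) (\<rho> (Suc (N + j)))"
  have T1: "forest W (N + j) T1" "shape F T1 (N + j) = \<rho> (N + j)" if "T1 \<in> forests_along W \<rho> T N j" for T1
    using that by (auto simp: forests_along_def)
  have fin: "\<forall>T1\<in>forests_along W \<rho> T N j. finite (extensions W (N + j) T1 (\<rho> (Suc (N + j))))"
    using finite_extensions[OF W] T1 by blast
  have disj: "\<forall>T1\<in>forests_along W \<rho> T N j. \<forall>T2\<in>forests_along W \<rho> T N j. T1 \<noteq> T2 \<longrightarrow>
      extensions W (N + j) T1 (\<rho> (Suc (N + j))) \<inter> extensions W (N + j) T2 (\<rho> (Suc (N + j))) = {}"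
    by (auto simp: extensions_def)
  have "card (forests_along W \<rho> T N (Suc j)) =
      (\<Sum>T1\<in>forests_along W \<rho> T N j. card (extensions W (N + j) T1 (\<rho> (Suc (N + j)))))"
    unfolding forests_along_Suc using Suc.IH fin disj by (intro card_UN_disjoint) auto
  also have "\<dots> = card (forests_along W \<rho> T N j) * ?w"
  proof -
    have "card (extensions W (N + j) T1 (\<rho> (Suc (N + j)))) = ?w" if "T1 \<in> forests_along W \<rho> T N j" for T1
      using card_extensions[OF W T1(1)[OF that]] T1(2)[OF that] ks by simp
    then show ?thesis by simp
  qed
  finally show ?case
    using Suc.IH fin by (simp add: forests_along_Suc)
qed

definition initial_forest :: "('q \<times> bool \<Rightarrow> nat) \<Rightarrow> (nat \<Rightarrow> 'q) set" where
  "initial_forest r = (\<lambda>q. trunc 0 (\<lambda>_. q)) ` {q\<in>Q0. r (q, False) = 1}"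

lemma kdis_alpha'_nonzeroD:
  assumes "kdis_alpha' Q Q0 r \<noteq> 0"
  shows "q \<notin> Q0 \<or> b \<Longrightarrow> r (q, b) = 0" and "q \<in> Q0 \<Longrightarrow> r (q, False) \<le> 1"
  using assms by (auto simp: kdis_alpha'_def split: if_splits)

lemma shape_0:
  assumes "trunc 0 ` T = T"
  shows "shape F T 0 (q, b) = (if b then 0 else card {x\<in>T. x 0 = q})"
  using shape_eq_card[of F T 0 q b] assms by auto

lemma forest_initial_forest: "forest W 0 (initial_forest r)"
proof -
  have "finite (initial_forest r)"
    unfolding initial_forest_def using Q0_subset finite_Q by (auto intro: finite_subset)
  then show ?thesis by (auto simp: forest_def initial_forest_def trunc_trunc)
qed

lemma shape_initial_forest:
  assumes a: "kdis_alpha' Q Q0 r \<noteq> 0"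
  shows "shape F (initial_forest r) 0 = r"
proof
  fix x :: "'q \<times> bool"
  obtain q b where x: "x = (q, b)" by (cases x)
  have "{y\<in>initial_forest r. y 0 = q} = (if q \<in> Q0 \<and> r (q, False) = 1 then {trunc 0 (\<lambda>_. q)} else {})"
    by (auto simp: initial_forest_def)
  moreover have "r (q, False) = (if q \<in> Q0 \<and> r (q, False) = 1 then 1 else 0)"
    using kdis_alpha'_nonzeroD(1)[OF a, of q False] kdis_alpha'_nonzeroD(2)[OF a, of q]
    by (cases "q \<in> Q0") auto
  moreover have "b \<Longrightarrow> r (q, b) = 0" using kdis_alpha'_nonzeroD(1)[OF a, of q b] by simp
  ultimately show "shape F (initial_forest r) 0 x = r x"
    using shape_0[OF forest_image_trunc[OF forest_initial_forest]] x by (cases b) auto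
qed

lemma initial_forest_unique:
  assumes a: "kdis_alpha' Q Q0 r \<noteq> 0" and T: "forest W 0 T" and s: "shape F T 0 = r"
  shows "T = initial_forest r"
proof -
  have count: "card {x\<in>T. x 0 = q} = r (q, False)" for q
    using shape_0[OF forest_image_trunc[OF T], of q False] s by simp
  have fin: "finite {x\<in>T. x 0 = q}" for q using forest_finite[OF T] by simp
  have root: "x = trunc 0 (\<lambda>_. x 0)" if "x \<in> T" for x
    using forest_trunc[OF T that] by (metis trunc_eq_iff le_zero_eq)
  show ?thesis
  proof
    show "T \<subseteq> initial_forest r"
    proof
      fix x assume x: "x \<in> T"
      then have "{y\<in>T. y 0 = x 0} \<noteq> {}" by blast
      then have "r (x 0, False) \<noteq> 0" using count[of "x 0"] fin[of "x 0"] card_0_eq by metis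
      moreover have x0: "x 0 \<in> Q0"
        using calculation kdis_alpha'_nonzeroD(1)[OF a, of "x 0" False] by auto
      ultimately have "r (x 0, False) = 1"
        using kdis_alpha'_nonzeroD(2)[OF a x0] by linarith
      with x0 show "x \<in> initial_forest r" using root[OF x] unfolding initial_forest_def by blast
    qed
    show "initial_forest r \<subseteq> T"
    proof
      fix x assume "x \<in> initial_forest r"
      then obtain q where q: "r (q, False) = 1" "x = trunc 0 (\<lambda>_. q)" by (auto simp: initial_forest_def)
      then have "card {y\<in>T. y 0 = q} = 1" using count by simp
      then have "{y\<in>T. y 0 = q} \<noteq> {}" by force
      then obtain y where "y \<in> T" "y 0 = q" by blast
      then show "x \<in> T" using root q by metis
    qed
  qed
qed

end

lemma flag_if_shape_in_kdis_F':
  assumes "finite (trunc m ` S)" and "shape F S m \<in> kdis_F' Q k" and "p \<in> S" and "p m \<in> Q"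
  shows "flag F S p m"
proof (rule ccontr)
  assume "\<not> flag F S p m"
  then have "trunc m p \<in> {x \<in> trunc m ` S. x m = p m \<and> flag F S x m = False}"
    using assms(3) by simp
  then have "shape F S m (p m, False) \<noteq> 0"
    using assms(1) shape_eq_card[of F S m "p m" False] by (metis (no_types, lifting) card_0_eq empty_iff finite_subset mem_Collect_eq subsetI)
  then show False using assms(2,4) by (simp add: kdis_F'_def)
qed

lemma visits_F_infinitely_often:
  assumes "\<And>m. finite (trunc m ` S)" and "\<And>p m. p \<in> S \<Longrightarrow> p m \<in> Q"
    and "infinite {m. shape F S m \<in> kdis_F' Q k}" and "p \<in> S"
  shows "infinite {i. p i \<in> F}"
  unfolding infinite_nat_iff_unbounded_le
proof
  fix B
  have all_flagged: "flag F S p' m" if "shape F S m \<in> kdis_F' Q k" "p' \<in> S" for m p'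
    using flag_if_shape_in_kdis_F'[OF assms(1) that assms(2)[OF that(2)]] .
  obtain m0 where m0: "B \<le> m0" "shape F S m0 \<in> kdis_F' Q k"
    using assms(3) by (auto simp: infinite_nat_iff_unbounded_le)
  obtain m1 where m1: "Suc m0 \<le> m1" "shape F S m1 \<in> kdis_F' Q k"
    using assms(3) by (auto simp: infinite_nat_iff_unbounded_le)
  have "\<not> flag F S p (Suc m0)"
    using all_flagged[OF m0(2)] by auto
  moreover have "flag F S p m1" using all_flagged[OF m1(2) assms(4)] .
  ultimately obtain j where "Suc m0 \<le> j" "p j \<in> F"
    using visits_F_if_flag_set[OF _ m1(1)] by blast
  then show "\<exists>j\<ge>B. j \<in> {i. p i \<in> F}" using m0(1) le_SucI order_trans by blast
qed

context nba_kdis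
begin

definition kdis_run :: "(nat \<Rightarrow> 'a) \<Rightarrow> (nat \<Rightarrow> 'q \<times> bool \<Rightarrow> nat) \<Rightarrow> bool" where
  "kdis_run W \<rho> \<longleftrightarrow> \<rho> 0 \<in> kstates Q k \<and> kdis_alpha' Q Q0 (\<rho> 0) \<noteq> 0 \<and>
     (\<forall>i. \<rho> (Suc i) \<in> kstates Q k \<and> kdis_w Q \<delta> F k (\<rho> i) (W i) (\<rho> (Suc i)) \<noteq> 0)"

definition kdis_accepting :: "(nat \<Rightarrow> 'q \<times> bool \<Rightarrow> nat) \<Rightarrow> bool" where
  "kdis_accepting \<rho> \<longleftrightarrow> infinite {i. \<rho> i \<in> kdis_F' Q k}"

lemma kdis_run_kstates: "kdis_run W \<rho> \<Longrightarrow> \<rho> i \<in> kstates Q k"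
  by (cases i) (auto simp: kdis_run_def)

lemma kdis_run_weight_nonzero: "kdis_run W \<rho> \<Longrightarrow> kdis_w Q \<delta> F k (\<rho> i) (W i) (\<rho> (Suc i)) \<noteq> 0"
  by (simp add: kdis_run_def)

definition witness_sets :: "(nat \<Rightarrow> 'a) \<Rightarrow> (nat \<Rightarrow> 'q \<times> bool \<Rightarrow> nat) \<Rightarrow> (nat \<Rightarrow> 'q) set set" where
  "witness_sets W \<rho> = {S. S \<subseteq> nba_final_paths \<delta> Q0 F W \<and> S \<noteq> {} \<and> (\<forall>m. shape F S m = \<rho> m)}"

lemma kdis_alpha'_shape_0:
  assumes "S \<noteq> {}" and "\<forall>p\<in>S. p 0 \<in> Q0"
  shows "kdis_alpha' Q Q0 (shape F S 0) \<noteq> 0"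
proof -
  have shape0: "shape F S 0 (q, b) = (if b then 0 else card {x\<in>trunc 0 ` S. x 0 = q})" for q b
    using shape_0[of "trunc 0 ` S" q b] shape_trunc_image[of F 0 S] by simp
  have "card {x\<in>trunc 0 ` S. x 0 = q} = 0" if "q \<notin> Q0" for q
  proof -
    have "{x\<in>trunc 0 ` S. x 0 = q} = {}" using assms(2) that by auto
    then show ?thesis by (simp only: card.empty)
  qed
  moreover have "card {x\<in>trunc 0 ` S. x 0 = q} \<le> 1" for q
  proof -
    have "{x\<in>trunc 0 ` S. x 0 = q} \<subseteq> {trunc 0 (\<lambda>_. q)}" by (auto simp: trunc_eq_iff)
    then show ?thesis using card_mono[of "{trunc 0 (\<lambda>_. q)}"] by fastforce
  qed
  ultimately show ?thesis by (auto simp: kdis_alpha'_def shape0) fastforce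
qed

lemma trunc_Suc_image_in_extensions:
  assumes "finite S" and "\<forall>p\<in>S. nba_path \<delta> Q0 W p"
  shows "trunc (Suc m) ` S \<in> extensions W m (trunc m ` S) (shape F S (Suc m))"
  using forest_trunc_image[OF assms] shape_trunc_image[of F "Suc m" S] image_trunc_trunc[of m "Suc m" S]
  by (simp add: extensions_def)

lemma kdis_w_shape_nonzero:
  assumes W: "word Sig W" and "finite S" and P: "\<forall>p\<in>S. nba_path \<delta> Q0 W p"
    and ks: "shape F S m \<in> kstates Q k" "shape F S (Suc m) \<in> kstates Q k"
  shows "kdis_w Q \<delta> F k (shape F S m) (W m) (shape F S (Suc m)) \<noteq> 0"
proof -
  have T: "forest W m (trunc m ` S)" by (rule forest_trunc_image[OF assms(2) P])
  have "card (extensions W m (trunc m ` S) (shape F S (Suc m))) =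
      kdis_w Q \<delta> F k (shape F S m) (W m) (shape F S (Suc m))"
    using card_extensions[OF W T] ks by (simp add: shape_trunc_image)
  moreover have "extensions W m (trunc m ` S) (shape F S (Suc m)) \<noteq> {}"
    using trunc_Suc_image_in_extensions[OF assms(2) P] by blast
  ultimately show ?thesis using finite_extensions[OF W T] by (metis card_0_eq)
qed

end

locale kambiguous_nba = nba_kdis +
  assumes ambiguous: "k_ambiguous Q Sig \<delta> Q0 F k"
begin

lemma finite_final_paths: "word Sig W \<Longrightarrow> finite (nba_final_paths \<delta> Q0 F W)"
  and card_final_paths_le: "word Sig W \<Longrightarrow> card (nba_final_paths \<delta> Q0 F W) \<le> k"
  using ambiguous by (auto simp: k_ambiguous_def)

lemma finite_if_final_paths: "word Sig W \<Longrightarrow> S \<subseteq> nba_final_paths \<delta> Q0 F W \<Longrightarrow> finite S"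
  using finite_final_paths finite_subset by blast

lemma shape_in_kstates:
  assumes W: "word Sig W" and S: "S \<subseteq> nba_final_paths \<delta> Q0 F W" "S \<noteq> {}"
  shows "shape F S m \<in> kstates Q k"
proof -
  have fS: "finite S" by (rule finite_if_final_paths[OF W S(1)])
  have "shape F S m x \<le> k" for x
  proof -
    obtain q b where x: "x = (q, b)" by (cases x)
    have "shape F S m x \<le> card {p\<in>S. p m = q \<and> flag F S p m = b}"
      unfolding shape_def x using fS by (simp add: card_image_le)
    also have "\<dots> \<le> card (nba_final_paths \<delta> Q0 F W)"
      using S(1) finite_final_paths[OF W] by (intro card_mono) auto
    finally show ?thesis using card_final_paths_le[OF W] by simp
  qed
  moreover have "shape F S m (q, b) = 0" if "q \<notin> Q" for q b
  proof -
    have "{p\<in>S. p m = q \<and> flag F S p m = b} = {}"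
      using S(1) nba_path_in_Q[OF W] that by (auto simp: nba_final_paths_def)
    then show ?thesis unfolding shape_def by (simp only: prod.case image_empty card.empty)
  qed
  moreover have "shape F S m \<noteq> (\<lambda>_. 0)"
  proof -
    obtain p where p: "p \<in> S" using S(2) by blast
    then have "trunc m p \<in> trunc m ` {x\<in>S. x m = p m \<and> flag F S x m = flag F S p m}" by blast
    then have "shape F S m (p m, flag F S p m) \<noteq> 0" using fS by (auto simp: shape_def)
    then show ?thesis by (metis)
  qed
  ultimately show ?thesis by (simp add: kstates_def)
qed

lemma accepting_shape:
  assumes W: "word Sig W" and S: "S \<subseteq> nba_final_paths \<delta> Q0 F W" "S \<noteq> {}"
  shows "kdis_accepting (shape F S)"
proof (rule ccontr)
  have fS: "finite S" by (rule finite_if_final_paths[OF W S(1)])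
  assume "\<not> kdis_accepting (shape F S)"
  then obtain n0 where n0: "\<forall>i\<ge>n0. shape F S i \<notin> kdis_F' Q k"
    by (auto simp: kdis_accepting_def infinite_nat_iff_unbounded_le)
  have "\<forall>p\<in>S. \<forall>i. p i \<in> Q"
    using S(1) nba_path_in_Q[OF W] by (auto simp: nba_final_paths_def)
  then have unflagged: "\<forall>i\<ge>n0. \<exists>p\<in>S. \<not> flag F S p i"
    using n0 shape_in_kstates[OF W S] bpp_shape_iff[OF fS]
    by (auto simp: kdis_F'_def bpp_def)
  have "\<forall>p\<in>S. \<exists>j\<ge>n0. p j \<in> F"
    using S(1) by (auto simp: nba_final_paths_def infinite_nat_iff_unbounded_le)
  then obtain J where J: "\<And>p. p \<in> S \<Longrightarrow> n0 \<le> J p \<and> p (J p) \<in> F" by metis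
  define M where "M = Suc (Max (J ` S))"
  have "flag F S p M" if p: "p \<in> S" for p
  proof -
    have "flag F S p (Suc (J p))" using J[OF p] unflagged by simp
    moreover obtain d where "M = Suc (J p) + d"
      using fS p by (metis M_def Max_ge Suc_le_mono finite_imageI image_eqI le_Suc_ex)
    moreover have "\<forall>i\<ge>Suc (J p). \<exists>p'\<in>S. \<not> flag F S p' i" using unflagged J[OF p] by auto
    ultimately show ?thesis using flag_persists by metis
  qed
  moreover obtain p0 where "p0 \<in> S" using S(2) by blast
  then have "n0 \<le> M" using J fS by (metis M_def Max_ge finite_imageI image_eqI le_SucI order_trans)
  ultimately show False using unflagged by blast
qed

lemma kdis_run_shape:
  assumes W: "word Sig W" and S: "S \<subseteq> nba_final_paths \<delta> Q0 F W" "S \<noteq> {}"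
  shows "kdis_run W (shape F S)"
proof -
  have P: "\<forall>p\<in>S. nba_path \<delta> Q0 W p" using S(1) by (auto simp: nba_final_paths_def)
  then have "kdis_alpha' Q Q0 (shape F S 0) \<noteq> 0"
    using kdis_alpha'_shape_0[OF S(2)] by (auto simp: nba_path_def)
  then show ?thesis
    using shape_in_kstates[OF W S] kdis_w_shape_nonzero[OF W finite_if_final_paths[OF W S(1)] P]
      shape_in_kstates[OF W S]
    by (simp add: kdis_run_def)
qed

end

lemma trunc_image_inverse_limit:
  assumes step: "\<And>j. trunc (N + j) ` X (Suc j) = X j"
    and fixed: "\<And>j x. x \<in> X j \<Longrightarrow> trunc (N + j) x = x"
  shows "trunc (N + j) ` {p. \<forall>j. trunc (N + j) p \<in> X j} = X j"
proof
  show "trunc (N + j) ` {p. \<forall>j. trunc (N + j) p \<in> X j} \<subseteq> X j" by blast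
  have step_le: "trunc (N + j) ` X (j + d) = X j" for j d
  proof (induction d)
    case 0
    show ?case using fixed[of _ j] by force
  next
    case (Suc d)
    have "trunc (N + j) ` X (j + Suc d) = trunc (N + j) ` trunc (N + (j + d)) ` X (Suc (j + d))"
      by simp
    then show ?case using Suc.IH step by simp
  qed
  show "X j \<subseteq> trunc (N + j) ` {p. \<forall>j. trunc (N + j) p \<in> X j}"
  proof
    fix x assume x: "x \<in> X j"
    have "\<exists>ch. \<forall>i. (ch i \<in> X (j + i) \<and> trunc (N + j) (ch i) = x) \<and>
        trunc (N + j + i) (ch (Suc i)) = ch i"
    proof (rule dependent_nat_choice)
      show "\<exists>y. y \<in> X (j + 0) \<and> trunc (N + j) y = x" using x fixed by auto
      fix y i assume y: "y \<in> X (j + i) \<and> trunc (N + j) y = x"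
      then obtain y' where y': "y' \<in> X (j + Suc i)" "trunc (N + j + i) y' = y"
        using step[of "j + i"] by (metis add.assoc add_Suc_right image_iff)
      then have "trunc (N + j) y' = x" using y trunc_trunc_le[of "N + j" "N + j + i" y'] by simp
      then show "\<exists>y'. (y' \<in> X (j + Suc i) \<and> trunc (N + j) y' = x) \<and> trunc (N + j + i) y' = y"
        using y' by blast
    qed
    then obtain ch where ch: "\<And>i. ch i \<in> X (j + i)" "\<And>i. trunc (N + j) (ch i) = x"
      and ch_step: "\<And>i. trunc (N + j + i) (ch (Suc i)) = ch i" by blast
    have ch_fixed: "trunc (N + j + i) (ch i) = ch i" for i
      using fixed[OF ch(1)] by (simp add: add.assoc)
    have ch_le: "trunc (N + j + i) (ch (i + d)) = ch i" for i d
    proof (induction d)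
      case 0
      show ?case by (simp add: ch_fixed)
    next
      case (Suc d)
      have "trunc (N + j + i) (ch (i + Suc d)) = trunc (N + j + i) (trunc (N + j + (i + d)) (ch (Suc (i + d))))"
        by simp
      then show ?case using Suc.IH ch_step by simp
    qed
    define p where "p n = ch n n" for n
    have trunc_p: "trunc (N + j + i) p = ch i" for i
    proof
      fix n
      show "trunc (N + j + i) p n = ch i n"
      proof (cases "n \<le> N + j + i")
        case True
        have "ch n n = ch i n"
        proof (cases "n \<le> i")
          case True
          then show ?thesis using ch_le[of n "i - n"] trunc_apply[of n "N + j + n" "ch i"] by simp
        next
          case False
          then show ?thesis
            using ch_le[of i "n - i"] trunc_apply[OF \<open>n \<le> N + j + i\<close>, of "ch n"] by simp
        qed
        then show ?thesis using True by (simp add: p_def)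
      next
        case False
        then show ?thesis
          using trunc_fixed_beyond[OF ch_fixed[of i]] by (simp add: trunc_def)
      qed
    qed
    have "trunc (N + j') p \<in> X j'" for j'
    proof (cases "j \<le> j'")
      case True
      then show ?thesis using trunc_p[of "j' - j"] ch(1)[of "j' - j"] by simp
    next
      case False
      then have "trunc (N + j') p = trunc (N + j') x"
        using trunc_p[of 0] ch(2)[of 0] ch_fixed[of 0] trunc_trunc_le[of "N + j'" "N + j" p] by simp
      moreover have "trunc (N + j') x \<in> trunc (N + j') ` X (j' + (j - j'))"
        using x False by simp
      ultimately show ?thesis using step_le[of j' "j - j'"] by simp
    qed
    moreover have "x = trunc (N + j) p" using trunc_p[of 0] ch(2)[of 0] ch_fixed[of 0] by simp
    ultimately show "x \<in> trunc (N + j) ` {p. \<forall>j. trunc (N + j) p \<in> X j}" by blast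
  qed
qed

context nba_kdis
begin

lemma extensions_nonempty:
  assumes W: "word Sig W" and run: "kdis_run W \<rho>" and T: "forest W n T" and sh: "shape F T n = \<rho> n"
  shows "extensions W n T (\<rho> (Suc n)) \<noteq> {}"
  using card_extensions[OF W T] sh kdis_run_kstates[OF run] kdis_run_weight_nonzero[OF run, of n]
  by (metis card.empty)

lemma ex_forest_chain:
  assumes W: "word Sig W" and run: "kdis_run W \<rho>" and T: "forest W N T" and sh: "shape F T N = \<rho> N"
  obtains X where "X 0 = T" and "\<And>j. forest W (N + j) (X j)"
    and "\<And>j. X (Suc j) \<in> extensions W (N + j) (X j) (\<rho> (Suc (N + j)))"
proof -
  have "\<exists>X. \<forall>j. (forest W (N + j) (X j) \<and> shape F (X j) (N + j) = \<rho> (N + j) \<and> (j = 0 \<longrightarrow> X j = T)) \<and>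
      X (Suc j) \<in> extensions W (N + j) (X j) (\<rho> (Suc (N + j)))"
  proof (rule dependent_nat_choice)
    show "\<exists>Y. forest W (N + 0) Y \<and> shape F Y (N + 0) = \<rho> (N + 0) \<and> (0 = 0 \<longrightarrow> Y = T)"
      using T sh by simp
    fix Y j assume Y: "forest W (N + j) Y \<and> shape F Y (N + j) = \<rho> (N + j) \<and> (j = 0 \<longrightarrow> Y = T)"
    then obtain Y' where "Y' \<in> extensions W (N + j) Y (\<rho> (Suc (N + j)))"
      using extensions_nonempty[OF W run] by blast
    then show "\<exists>Y'. (forest W (N + Suc j) Y' \<and> shape F Y' (N + Suc j) = \<rho> (N + Suc j) \<and>
        (Suc j = 0 \<longrightarrow> Y' = T)) \<and> Y' \<in> extensions W (N + j) Y (\<rho> (Suc (N + j)))"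
      by (auto simp: extensions_def)
  qed
  then show ?thesis using that by blast
qed

lemma ex_witness_set_extending:
  assumes W: "word Sig W" and run: "kdis_run W \<rho>" and acc: "kdis_accepting \<rho>"
    and T: "forest W N T" and sh: "\<forall>i\<le>N. shape F T i = \<rho> i"
  shows "\<exists>S\<in>witness_sets W \<rho>. trunc N ` S = T"
proof -
  obtain X where X0: "X 0 = T" and X: "\<And>j. forest W (N + j) (X j)"
    and X_step: "\<And>j. X (Suc j) \<in> extensions W (N + j) (X j) (\<rho> (Suc (N + j)))"
    using ex_forest_chain[OF W run T] sh by blast
  define S where "S = {p. \<forall>j. trunc (N + j) p \<in> X j}"
  have S_trunc: "trunc (N + j) ` S = X j" for j
    unfolding S_def
    using X_step forest_trunc[OF X] by (intro trunc_image_inverse_limit) (auto simp: extensions_def)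
  have S_N: "trunc N ` S = T" using S_trunc[of 0] X0 by simp
  have finite_trunc: "finite (trunc m ` S)" for m
    using S_trunc[of m] forest_finite[OF X] image_trunc_trunc[of m "N + m" S]
    by (metis finite_imageI le_add2)
  have shape_S: "shape F S m = \<rho> m" for m
  proof (cases "m \<le> N")
    case True
    then show ?thesis using shape_cong_le[OF S_N True] sh by simp
  next
    case False
    then obtain j where j: "m = N + Suc j" by (metis add_Suc_right less_imp_Suc_add not_le)
    then have "shape F S m = shape F (X (Suc j)) m"
      using shape_trunc_image[of F m S] S_trunc[of "Suc j"] by simp
    then show ?thesis using X_step[of j] j by (simp add: extensions_def)
  qed
  have path: "nba_path \<delta> Q0 W p" if p: "p \<in> S" for p
  proof -
    have "trunc N p \<in> T" using p S_N by blast
    then have "p 0 \<in> Q0" using T by (auto simp: forest_def)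
    moreover have "p (Suc i) \<in> \<delta> (p i) (W i)" for i
    proof -
      have "trunc (N + Suc i) p \<in> X (Suc i)" using p unfolding S_def by blast
      then show ?thesis using X[of "Suc i"] by (auto simp: forest_def)
    qed
    ultimately show ?thesis by (simp add: nba_path_def)
  qed
  have in_Q: "p m \<in> Q" if "p \<in> S" for p m
    using nba_path_in_Q[OF W path[OF that]] .
  have acc_S: "infinite {m. shape F S m \<in> kdis_F' Q k}"
    using acc shape_S by (simp add: kdis_accepting_def)
  have "infinite {i. p i \<in> F}" if "p \<in> S" for p
    by (rule visits_F_infinitely_often[where S = S and Q = Q and k = k])
      (simp_all add: finite_trunc in_Q acc_S that)
  then have "S \<subseteq> nba_final_paths \<delta> Q0 F W" using path by (auto simp: nba_final_paths_def)
  moreover have "S \<noteq> {}"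
  proof
    assume "S = {}"
    then have "shape F T N = (\<lambda>_. 0)" using S_N by (auto simp: shape_def)
    then show False using sh kdis_run_kstates[OF run, of N] by (auto simp: kstates_def)
  qed
  ultimately show ?thesis using shape_S S_N by (auto simp: witness_sets_def)
qed

end

lemma mono_bounded_nat_eventually_const:
  fixes f :: "nat \<Rightarrow> nat"
  assumes "mono f" and "\<And>n. f n \<le> B"
  obtains N0 where "\<And>n. N0 \<le> n \<Longrightarrow> f n = f N0"
proof -
  have "range f \<subseteq> {..B}" using assms(2) by auto
  then have fin: "finite (range f)" by (rule finite_subset) simp
  then have "Max (range f) \<in> range f" by (intro Max_in) auto
  then obtain N0 where N0: "f N0 = Max (range f)" by (metis rangeE)
  have "f n = f N0" if "N0 \<le> n" for n
  proof (rule antisym)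
    show "f n \<le> f N0" using N0 fin by simp
    show "f N0 \<le> f n" using assms(1) that by (rule monoD)
  qed
  then show ?thesis using that by blast
qed

context nba_kdis
begin

definition weight_prod :: "(nat \<Rightarrow> 'a) \<Rightarrow> (nat \<Rightarrow> 'q \<times> bool \<Rightarrow> nat) \<Rightarrow> nat \<Rightarrow> nat" where
  "weight_prod W \<rho> N = (\<Prod>n<N. kdis_w Q \<delta> F k (\<rho> n) (W n) (\<rho> (Suc n)))"

lemma weight_prod_add:
  "weight_prod W \<rho> (N + j) = weight_prod W \<rho> N * (\<Prod>n<j. kdis_w Q \<delta> F k (\<rho> (N + n)) (W (N + n)) (\<rho> (Suc (N + n))))"
  unfolding weight_prod_def by (induction j) (auto simp: mult.assoc)

lemma weight_prod_nonzero: "kdis_run W \<rho> \<Longrightarrow> weight_prod W \<rho> N \<noteq> 0"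
  by (simp add: weight_prod_def kdis_run_def)

lemma mono_weight_prod:
  assumes "kdis_run W \<rho>"
  shows "mono (weight_prod W \<rho>)"
proof
  fix N M :: nat assume "N \<le> M"
  then obtain j where j: "M = N + j" using le_Suc_ex by blast
  have "(\<Prod>n<j. kdis_w Q \<delta> F k (\<rho> (N + n)) (W (N + n)) (\<rho> (Suc (N + n)))) \<noteq> 0"
    using assms by (simp add: kdis_run_def)
  then have "1 \<le> (\<Prod>n<j. kdis_w Q \<delta> F k (\<rho> (N + n)) (W (N + n)) (\<rho> (Suc (N + n))))"
    by linarith
  then show "weight_prod W \<rho> N \<le> weight_prod W \<rho> M"
    unfolding j weight_prod_add by (metis mult.right_neutral mult_le_mono2)
qed

lemma card_forests_along_initial:
  assumes W: "word Sig W" and run: "kdis_run W \<rho>"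
  shows "finite (forests_along W \<rho> (initial_forest (\<rho> 0)) 0 N)"
    and "card (forests_along W \<rho> (initial_forest (\<rho> 0)) 0 N) = weight_prod W \<rho> N"
  using card_forests_along[OF W forest_initial_forest, of "\<rho> 0" \<rho> N] run
    shape_initial_forest kdis_run_kstates[OF run]
  by (simp_all add: kdis_run_def weight_prod_def)

end

context kambiguous_nba
begin

lemma trunc_image_in_forests_along:
  assumes W: "word Sig W" and S: "S \<in> witness_sets W \<rho>"
  shows "trunc (M + j) ` S \<in> forests_along W \<rho> (trunc M ` S) M j"
proof -
  have "S \<subseteq> nba_final_paths \<delta> Q0 F W" and sh: "\<And>m. shape F S m = \<rho> m"
    using S by (auto simp: witness_sets_def)
  then have "finite S" and "\<forall>p\<in>S. nba_path \<delta> Q0 W p"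
    using finite_final_paths[OF W] finite_subset by (auto simp: nba_final_paths_def)
  moreover have "shape F (trunc (M + j) ` S) i = \<rho> i" if "i \<le> M + j" for i
    using shape_cong_le[OF refl that, where S = S and F = F] sh by simp
  ultimately show ?thesis
    using forest_trunc_image by (auto simp: forests_along_def)
qed

lemma finite_witness_sets: "word Sig W \<Longrightarrow> finite (witness_sets W \<rho>)"
  and card_witness_sets_le: "word Sig W \<Longrightarrow> card (witness_sets W \<rho>) \<le> 2 ^ k"
proof -
  assume W: "word Sig W"
  have sub: "witness_sets W \<rho> \<subseteq> Pow (nba_final_paths \<delta> Q0 F W)"
    by (auto simp: witness_sets_def)
  then show "finite (witness_sets W \<rho>)" using finite_final_paths[OF W] finite_subset by blast
  have "card (witness_sets W \<rho>) \<le> card (Pow (nba_final_paths \<delta> Q0 F W))"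
    using sub finite_final_paths[OF W] by (intro card_mono) auto
  also have "\<dots> \<le> 2 ^ k"
    using finite_final_paths[OF W] card_final_paths_le[OF W] by (simp add: card_Pow power_increasing)
  finally show "card (witness_sets W \<rho>) \<le> 2 ^ k" .
qed

lemma trunc_0_witness_set:
  assumes W: "word Sig W" and run: "kdis_run W \<rho>" and S: "S \<in> witness_sets W \<rho>"
  shows "trunc 0 ` S = initial_forest (\<rho> 0)"
  using initial_forest_unique[of "\<rho> 0" W "trunc 0 ` S"] trunc_image_in_forests_along[OF W S, of 0 0] run
  by (simp add: kdis_run_def forests_along_def)

lemma weight_prod_le_card_witness_sets:
  assumes W: "word Sig W" and run: "kdis_run W \<rho>" and acc: "kdis_accepting \<rho>"
  shows "weight_prod W \<rho> N \<le> card (witness_sets W \<rho>)"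
proof -
  let ?T = "forests_along W \<rho> (initial_forest (\<rho> 0)) 0 N"
  have "?T \<subseteq> (\<lambda>S. trunc N ` S) ` witness_sets W \<rho>"
  proof
    fix T assume "T \<in> ?T"
    then have "forest W N T" and "\<forall>i\<le>N. shape F T i = \<rho> i" by (auto simp: forests_along_def)
    then show "T \<in> (\<lambda>S. trunc N ` S) ` witness_sets W \<rho>"
      using ex_witness_set_extending[OF W run acc] by blast
  qed
  then have "card ?T \<le> card (witness_sets W \<rho>)"
    using finite_witness_sets[OF W] card_image_le card_mono finite_imageI le_trans by metis
  then show ?thesis using card_forests_along_initial[OF W run] by simp
qed

lemma inj_on_trunc_witness_sets:
  assumes W: "word Sig W" and run: "kdis_run W \<rho>"
    and one: "\<And>j. (\<Prod>n<j. kdis_w Q \<delta> F k (\<rho> (N + n)) (W (N + n)) (\<rho> (Suc (N + n)))) = 1"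
  shows "inj_on (\<lambda>S. trunc N ` S) (witness_sets W \<rho>)"
proof (rule inj_onI)
  fix S S' assume S: "S \<in> witness_sets W \<rho>" and S': "S' \<in> witness_sets W \<rho>"
    and eq: "trunc N ` S = trunc N ` S'"
  have fin: "finite S" "finite S'"
    using S S' finite_final_paths[OF W] finite_subset by (auto simp: witness_sets_def)
  have "trunc (N + j) ` S = trunc (N + j) ` S'" for j
  proof -
    have forest: "forest W N (trunc N ` S)" and sh: "shape F (trunc N ` S) N = \<rho> N"
      using trunc_image_in_forests_along[OF W S, of N 0] by (auto simp: forests_along_def)
    have "card (forests_along W \<rho> (trunc N ` S) N j) = 1"
      using card_forests_along[of W N "trunc N ` S" \<rho> j, OF W forest sh kdis_run_kstates[OF run]] one
      by simp
    then obtain X where "forests_along W \<rho> (trunc N ` S) N j = {X}" by (rule card_1_singletonE)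
    then show ?thesis
      using trunc_image_in_forests_along[OF W S, of N j] trunc_image_in_forests_along[OF W S', of N j] eq
      by simp
  qed
  then show "S = S'"
    using mem_if_truncs_mem[OF fin(1), of N] mem_if_truncs_mem[OF fin(2), of N] by blast
qed

lemma weight_prod_eventually_card_witness_sets:
  assumes W: "word Sig W" and run: "kdis_run W \<rho>" and acc: "kdis_accepting \<rho>"
  obtains N0 where "\<And>N. N0 \<le> N \<Longrightarrow> weight_prod W \<rho> N = card (witness_sets W \<rho>)"
proof -
  obtain N0 where N0: "\<And>N. N0 \<le> N \<Longrightarrow> weight_prod W \<rho> N = weight_prod W \<rho> N0"
    using mono_bounded_nat_eventually_const[OF mono_weight_prod[OF run]]
      weight_prod_le_card_witness_sets[OF W run acc] card_witness_sets_le[OF W] le_trans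
    by metis
  have "(\<Prod>n<j. kdis_w Q \<delta> F k (\<rho> (N0 + n)) (W (N0 + n)) (\<rho> (Suc (N0 + n)))) = 1" for j
    using N0[of "N0 + j"] weight_prod_add[of W \<rho> N0 j] weight_prod_nonzero[OF run, of N0] by simp
  then have inj: "inj_on (\<lambda>S. trunc N0 ` S) (witness_sets W \<rho>)"
    by (rule inj_on_trunc_witness_sets[OF W run])
  have "(\<lambda>S. trunc N0 ` S) ` witness_sets W \<rho> \<subseteq> forests_along W \<rho> (initial_forest (\<rho> 0)) 0 N0"
    using trunc_image_in_forests_along[OF W, of _ \<rho> 0 N0] trunc_0_witness_set[OF W run] by auto
  then have "card (witness_sets W \<rho>) \<le> weight_prod W \<rho> N0"
    using card_inj_on_le[OF inj] card_forests_along_initial[OF W run] by metis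
  then have "weight_prod W \<rho> N0 = card (witness_sets W \<rho>)"
    using weight_prod_le_card_witness_sets[OF W run acc, of N0] by simp
  then show ?thesis using that N0 by metis
qed

end

lemma sum_Pow_alternating:
  assumes "finite X"
  shows "(\<Sum>S\<in>Pow X. (-1::real) ^ card S) = (if X = {} then 1 else 0)"
proof -
  have "(\<Sum>S\<in>Pow X. (-1::real) ^ card S) = 0 ^ card X"
    using prod_diff_conv_sum[OF assms, of "\<lambda>_. 1::real" "\<lambda>_. 1"] by simp
  then show ?thesis using assms by (simp add: power_0_left card_eq_0_iff)
qed

lemma sum_nonempty_subsets_alternating:
  assumes "finite X"
  shows "(\<Sum>S\<in>Pow X - {{}}. (-1::real) ^ (card S - 1)) = (if X = {} then 0 else 1)"
proof -
  have "(-1::real) ^ (card S - 1) = - ((-1) ^ card S)" if "S \<in> Pow X - {{}}" for S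
  proof -
    have "finite S" "S \<noteq> {}" using that assms finite_subset by auto
    then have "card S \<noteq> 0" by simp
    then show ?thesis by (cases "card S") auto
  qed
  then have "(\<Sum>S\<in>Pow X - {{}}. (-1::real) ^ (card S - 1)) = - (\<Sum>S\<in>Pow X - {{}}. (-1) ^ card S)"
    by (simp add: sum_negf)
  also have "\<dots> = 1 - (\<Sum>S\<in>Pow X. (-1::real) ^ card S)"
    using assms by (simp add: sum_diff1)
  finally show ?thesis using sum_Pow_alternating[OF assms] by simp
qed

lemma minus_one_power_shift:
  assumes "1 \<le> s" and "1 \<le> c"
  shows "(-1::real) ^ (s - 1) * (-1) powi (int c - int s) = (-1) ^ (c - 1)"
proof -
  have "(-1::real) ^ (s - 1) * (-1) powi (int c - int s) = (-1) powi (int s - 1) * (-1) powi (int c - int s)"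
    using assms(1) by (simp add: power_int_def nat_diff_distrib')
  also have "\<dots> = (-1) powi (int c - 1)"
    using power_int_add[of "-1::real" "int s - 1" "int c - int s"] by simp
  also have "\<dots> = (-1) ^ (c - 1)"
    using assms(2) by (simp add: power_int_def nat_diff_distrib')
  finally show ?thesis .
qed

context nba_kdis
begin

abbreviation "kdis_edge_rel \<equiv> kdis_edges Q Sig \<delta> F k"

lemma kdis_M'_eq_0_iff: "kdis_M' Q \<delta> F k a r r' = 0 \<longleftrightarrow> kdis_w Q \<delta> F k r a r' = 0"
  by (simp add: kdis_M'_def power_int_def)

lemma kdis_run_edge:
  assumes W: "word Sig W" and run: "kdis_run W \<rho>"
  shows "(\<rho> n, \<rho> (Suc n)) \<in> kdis_edge_rel"
proof -
  have "W n \<in> Sig" using W by (simp add: word_def)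
  moreover have "kdis_M' Q \<delta> F k (W n) (\<rho> n) (\<rho> (Suc n)) \<noteq> 0"
    using kdis_M'_eq_0_iff kdis_run_weight_nonzero[OF run] by simp
  ultimately show ?thesis using kdis_run_kstates[OF run] unfolding kdis_edges_def by blast
qed

lemma kdis_run_rtrancl:
  assumes W: "word Sig W" and run: "kdis_run W \<rho>" and "i \<le> j"
  shows "(\<rho> i, \<rho> j) \<in> kdis_edge_rel\<^sup>*"
  using assms(3)
proof (induction j rule: dec_induct)
  case base
  then show ?case by simp
next
  case (step n)
  then show ?case using kdis_run_edge[OF W run, of n] by (blast intro: rtrancl_into_rtrancl)
qed

lemma kdis_run_trancl:
  assumes W: "word Sig W" and run: "kdis_run W \<rho>" and "i < j"
  shows "(\<rho> i, \<rho> j) \<in> kdis_edge_rel\<^sup>+"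
proof -
  obtain d where j: "j = Suc (i + d)" using less_imp_Suc_add[OF assms(3)] by blast
  have "(\<rho> i, \<rho> (i + d)) \<in> kdis_edge_rel\<^sup>*" by (rule kdis_run_rtrancl[OF W run]) simp
  then show ?thesis using kdis_run_edge[OF W run, of "i + d"] j by (blast intro: rtrancl_into_trancl1)
qed

lemma kdis_run_in_kdis_S:
  assumes W: "word Sig W" and run: "kdis_run W \<rho>" and acc: "kdis_accepting \<rho>"
  shows "\<rho> i \<in> kdis_S Q Sig \<delta> Q0 F k"
proof -
  let ?A = "{j. i \<le> j \<and> \<rho> j \<in> kdis_F' Q k}"
  have "?A = {j. \<rho> j \<in> kdis_F' Q k} - {..<i}" by auto
  then have "infinite ?A" using acc by (simp add: kdis_accepting_def)
  moreover have "finite (\<rho> ` ?A)"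
    using kdis_run_kstates[OF run] finite_kstates[OF finite_Q] by (auto intro: finite_subset)
  ultimately have "\<not> inj_on \<rho> ?A" using finite_imageD by blast
  then obtain j1 j2 where j: "j1 \<in> ?A" "j2 \<in> ?A" "j1 < j2" "\<rho> j1 = \<rho> j2"
    by (metis (mono_tags, lifting) inj_onI linorder_neqE_nat)
  have "(\<rho> j1, \<rho> j1) \<in> kdis_edge_rel\<^sup>+" using kdis_run_trancl[OF W run j(3)] j(4) by simp
  moreover have "(\<rho> i, \<rho> j1) \<in> kdis_edge_rel\<^sup>*" using kdis_run_rtrancl[OF W run] j(1) by simp
  moreover have "(\<rho> 0, \<rho> i) \<in> kdis_edge_rel\<^sup>*" by (rule kdis_run_rtrancl[OF W run]) simp
  ultimately show ?thesis
    using j(1) kdis_run_kstates[OF run] run unfolding kdis_S_def kdis_run_def by blast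
qed

lemma wba_final_paths_kdis:
  assumes W: "word Sig W"
  shows "wba_final_paths (kdis_S Q Sig \<delta> Q0 F k) (kdis_M Q Sig \<delta> Q0 F k) (kdis_alpha Q Sig \<delta> Q0 F k)
      (kdis_F Q Sig \<delta> Q0 F k) W = {\<rho>. kdis_run W \<rho> \<and> kdis_accepting \<rho>}"
proof -
  have "kdis_run W \<rho> \<and> kdis_accepting \<rho>"
    if "\<rho> \<in> wba_final_paths (kdis_S Q Sig \<delta> Q0 F k) (kdis_M Q Sig \<delta> Q0 F k) (kdis_alpha Q Sig \<delta> Q0 F k)
      (kdis_F Q Sig \<delta> Q0 F k) W" for \<rho>
  proof -
    have S: "\<And>i. \<rho> i \<in> kdis_S Q Sig \<delta> Q0 F k" and acc: "infinite {i. \<rho> i \<in> kdis_F Q Sig \<delta> Q0 F k}"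
      and "kdis_alpha Q Sig \<delta> Q0 F k (\<rho> 0) \<noteq> 0" "\<And>i. kdis_M Q Sig \<delta> Q0 F k (W i) (\<rho> i) (\<rho> (Suc i)) \<noteq> 0"
      using that by (auto simp: wba_final_paths_def wba_path_def)
    then have "kdis_run W \<rho>"
      using kdis_M'_eq_0_iff by (auto simp: kdis_run_def kdis_alpha_def kdis_M_def kdis_S_def)
    moreover have "kdis_accepting \<rho>"
      using acc by (auto simp: kdis_accepting_def kdis_F_def elim: infinite_super[rotated])
    ultimately show ?thesis ..
  qed
  moreover have "\<rho> \<in> wba_final_paths (kdis_S Q Sig \<delta> Q0 F k) (kdis_M Q Sig \<delta> Q0 F k) (kdis_alpha Q Sig \<delta> Q0 F k)
      (kdis_F Q Sig \<delta> Q0 F k) W" if run: "kdis_run W \<rho>" and acc: "kdis_accepting \<rho>" for \<rho>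
  proof -
    have S: "\<And>i. \<rho> i \<in> kdis_S Q Sig \<delta> Q0 F k" by (rule kdis_run_in_kdis_S[OF W run acc])
    then have "{i. \<rho> i \<in> kdis_F Q Sig \<delta> Q0 F k} = {i. \<rho> i \<in> kdis_F' Q k}" by (auto simp: kdis_F_def)
    then show ?thesis
      using S run acc kdis_M'_eq_0_iff
      by (auto simp: wba_final_paths_def wba_path_def kdis_run_def kdis_accepting_def kdis_alpha_def kdis_M_def)
  qed
  ultimately show ?thesis by blast
qed

lemma prod_kdis_M:
  assumes W: "word Sig W" and run: "kdis_run W \<rho>" and acc: "kdis_accepting \<rho>"
  shows "(\<Prod>n\<le>i. kdis_M Q Sig \<delta> Q0 F k (W n) (\<rho> n) (\<rho> (Suc n))) =
    (-1) powi (int (rsize Q (\<rho> (Suc i))) - int (rsize Q (\<rho> 0))) * real (weight_prod W \<rho> (Suc i))"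
proof (induction i)
  case 0
  show ?case
    using kdis_run_in_kdis_S[OF W run acc] by (simp add: kdis_M_def kdis_M'_def weight_prod_def)
next
  case (Suc i)
  let ?s = "\<lambda>n. int (rsize Q (\<rho> n))"
  have "kdis_M Q Sig \<delta> Q0 F k (W (Suc i)) (\<rho> (Suc i)) (\<rho> (Suc (Suc i))) =
      (-1) powi (?s (Suc (Suc i)) - ?s (Suc i)) * real (kdis_w Q \<delta> F k (\<rho> (Suc i)) (W (Suc i)) (\<rho> (Suc (Suc i))))"
    using kdis_run_in_kdis_S[OF W run acc] by (simp add: kdis_M_def kdis_M'_def)
  moreover have "(-1::real) powi (?s (Suc i) - ?s 0) * (-1) powi (?s (Suc (Suc i)) - ?s (Suc i)) =
      (-1) powi (?s (Suc (Suc i)) - ?s 0)"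
    using power_int_add[of "-1::real" "?s (Suc i) - ?s 0" "?s (Suc (Suc i)) - ?s (Suc i)"] by simp
  ultimately show ?case
    using Suc.IH by (simp add: weight_prod_def algebra_simps)
qed

end

context kambiguous_nba
begin

lemma witness_set_props:
  assumes W: "word Sig W" and S: "S \<in> witness_sets W \<rho>"
  shows "finite S" and "S \<noteq> {}" and "\<And>p m. p \<in> S \<Longrightarrow> p m \<in> Q" and "\<And>m. shape F S m = \<rho> m"
  using S finite_if_final_paths[OF W] nba_path_in_Q[OF W]
  by (auto simp: witness_sets_def nba_final_paths_def)

lemma rsize_witness_set:
  assumes W: "word Sig W" and S: "S \<in> witness_sets W \<rho>"
  shows "rsize Q (\<rho> m) = card (trunc m ` S)"
  using rsize_shape[OF finite_Q witness_set_props(1)[OF W S]] witness_set_props[OF W S] by metis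

lemma card_witness_sets_eq:
  assumes W: "word Sig W" and S: "S \<in> witness_sets W \<rho>" and S': "S' \<in> witness_sets W \<rho>"
  shows "card S = card S'"
proof -
  obtain m where "inj_on (trunc m) S" and "inj_on (trunc m) S'"
    using inj_on_trunc_eventually[OF witness_set_props(1)[OF W S]]
      inj_on_trunc_eventually[OF witness_set_props(1)[OF W S']] by (metis max.cobounded1 max.cobounded2)
  then show ?thesis
    using rsize_witness_set[OF W S, of m] rsize_witness_set[OF W S', of m] by (simp add: card_image)
qed

end

lemma kdis_alpha'_nonzero_eq:
  assumes "kdis_alpha' Q Q0 r \<noteq> 0"
  shows "kdis_alpha' Q Q0 r = (-1) ^ (rsize Q r - 1)"
  using assms unfolding kdis_alpha'_def by presburger

context kambiguous_nba
begin

lemma witness_sets_nonempty: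
  assumes W: "word Sig W" and run: "kdis_run W \<rho>" and acc: "kdis_accepting \<rho>"
  shows "witness_sets W \<rho> \<noteq> {}"
  using weight_prod_le_card_witness_sets[OF W run acc, of 0] by (auto simp: weight_prod_def)

lemma path_weight_kdis:
  assumes W: "word Sig W" and run: "kdis_run W \<rho>" and acc: "kdis_accepting \<rho>"
  shows "path_weight (kdis_M Q Sig \<delta> Q0 F k) (kdis_alpha Q Sig \<delta> Q0 F k) W \<rho> =
    (\<Sum>S\<in>witness_sets W \<rho>. (-1::real) ^ (card S - 1))"
proof -
  obtain N0 where N0: "\<And>N. N0 \<le> N \<Longrightarrow> weight_prod W \<rho> N = card (witness_sets W \<rho>)"
    using weight_prod_eventually_card_witness_sets[OF W run acc] by blast
  obtain S0 where S0: "S0 \<in> witness_sets W \<rho>" using witness_sets_nonempty[OF W run acc] by blast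
  obtain m0 where m0: "\<And>m. m0 \<le> m \<Longrightarrow> inj_on (trunc m) S0"
    using inj_on_trunc_eventually[OF witness_set_props(1)[OF W S0]] by blast
  define c where "c = card S0"
  define s where "s = rsize Q (\<rho> 0)"
  have "1 \<le> c" using witness_set_props(1,2)[OF W S0] by (simp add: c_def Suc_le_eq card_gt_0_iff)
  have "1 \<le> s"
    using witness_set_props(1,2)[OF W S0] rsize_witness_set[OF W S0, of 0]
    by (simp add: s_def Suc_le_eq card_gt_0_iff)
  let ?L = "(-1::real) powi (int c - int s) * real (card (witness_sets W \<rho>))"
  have eventually_L: "(\<Prod>n\<le>i. kdis_M Q Sig \<delta> Q0 F k (W n) (\<rho> n) (\<rho> (Suc n))) = ?L"
    if "max N0 m0 \<le> i" for i
  proof -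
    have "rsize Q (\<rho> (Suc i)) = c"
      using rsize_witness_set[OF W S0, of "Suc i"] m0[of "Suc i"] that by (simp add: c_def card_image)
    then show ?thesis using prod_kdis_M[OF W run acc, of i] N0[of "Suc i"] that by (simp add: s_def)
  qed
  have "eventually (\<lambda>i. (\<Prod>n\<le>i. kdis_M Q Sig \<delta> Q0 F k (W n) (\<rho> n) (\<rho> (Suc n))) = ?L) sequentially"
    unfolding eventually_sequentially using eventually_L by blast
  then have "(\<lambda>i. \<Prod>n\<le>i. kdis_M Q Sig \<delta> Q0 F k (W n) (\<rho> n) (\<rho> (Suc n))) \<longlonglongrightarrow> ?L"
    by (rule tendsto_eventually)
  then have lim: "lim (\<lambda>i. \<Prod>n\<le>i. kdis_M Q Sig \<delta> Q0 F k (W n) (\<rho> n) (\<rho> (Suc n))) = ?L"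
    by (rule limI)
  have "kdis_alpha' Q Q0 (\<rho> 0) \<noteq> 0" using run by (simp add: kdis_run_def)
  then have "kdis_alpha Q Sig \<delta> Q0 F k (\<rho> 0) = (-1) ^ (s - 1)"
    using kdis_run_in_kdis_S[OF W run acc, of 0] kdis_alpha'_nonzero_eq
    by (simp add: kdis_alpha_def s_def)
  then have "path_weight (kdis_M Q Sig \<delta> Q0 F k) (kdis_alpha Q Sig \<delta> Q0 F k) W \<rho> =
      (-1) ^ (c - 1) * real (card (witness_sets W \<rho>))"
    using minus_one_power_shift[OF \<open>1 \<le> s\<close> \<open>1 \<le> c\<close>] by (simp add: path_weight_def lim mult.assoc[symmetric])
  also have "\<dots> = (\<Sum>S\<in>witness_sets W \<rho>. (-1::real) ^ (c - 1))"
    by simp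
  also have "\<dots> = (\<Sum>S\<in>witness_sets W \<rho>. (-1::real) ^ (card S - 1))"
    using card_witness_sets_eq[OF W S0] by (intro sum.cong) (auto simp: c_def)
  finally show ?thesis .
qed

lemma wba_final_paths_kdis_eq_image:
  assumes W: "word Sig W"
  shows "wba_final_paths (kdis_S Q Sig \<delta> Q0 F k) (kdis_M Q Sig \<delta> Q0 F k) (kdis_alpha Q Sig \<delta> Q0 F k)
      (kdis_F Q Sig \<delta> Q0 F k) W = shape F ` (Pow (nba_final_paths \<delta> Q0 F W) - {{}})"
proof -
  have "\<rho> \<in> shape F ` (Pow (nba_final_paths \<delta> Q0 F W) - {{}})"
    if run: "kdis_run W \<rho>" and acc: "kdis_accepting \<rho>" for \<rho>
  proof -
    obtain S where "S \<in> witness_sets W \<rho>" using witness_sets_nonempty[OF W run acc] by blast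
    then have "S \<in> Pow (nba_final_paths \<delta> Q0 F W) - {{}}" and "\<rho> = shape F S"
      by (auto simp: witness_sets_def)
    then show ?thesis by blast
  qed
  then show ?thesis
    using kdis_run_shape[OF W] accepting_shape[OF W] by (auto simp: wba_final_paths_kdis[OF W])
qed

lemma wba_L_kdis:
  assumes W: "word Sig W"
  shows "wba_L (kdis_S Q Sig \<delta> Q0 F k) (kdis_M Q Sig \<delta> Q0 F k) (kdis_alpha Q Sig \<delta> Q0 F k)
      (kdis_F Q Sig \<delta> Q0 F k) W = (if nba_final_paths \<delta> Q0 F W = {} then 0 else 1)"
proof -
  let ?A = "Pow (nba_final_paths \<delta> Q0 F W) - {{}}"
  have fin: "finite ?A" using finite_final_paths[OF W] by simp
  have "wba_L (kdis_S Q Sig \<delta> Q0 F k) (kdis_M Q Sig \<delta> Q0 F k) (kdis_alpha Q Sig \<delta> Q0 F k)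
      (kdis_F Q Sig \<delta> Q0 F k) W =
      (\<Sum>\<rho>\<in>shape F ` ?A. \<Sum>S\<in>{S\<in>?A. shape F S = \<rho>}. (-1::real) ^ (card S - 1))"
    unfolding wba_L_def wba_final_paths_kdis_eq_image[OF W]
  proof (rule sum.cong[OF refl])
    fix \<rho> assume "\<rho> \<in> shape F ` ?A"
    then have "kdis_run W \<rho>" and "kdis_accepting \<rho>"
      using kdis_run_shape[OF W] accepting_shape[OF W] by auto
    moreover have "witness_sets W \<rho> = {S\<in>?A. shape F S = \<rho>}"
      by (auto simp: witness_sets_def fun_eq_iff)
    ultimately show "path_weight (kdis_M Q Sig \<delta> Q0 F k) (kdis_alpha Q Sig \<delta> Q0 F k) W \<rho> =
        (\<Sum>S\<in>{S\<in>?A. shape F S = \<rho>}. (-1::real) ^ (card S - 1))"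
      using path_weight_kdis[OF W] by simp
  qed
  also have "\<dots> = (\<Sum>S\<in>?A. (-1::real) ^ (card S - 1))"
    using fin by (intro sum.group) auto
  also have "\<dots> = (if nba_final_paths \<delta> Q0 F W = {} then 0 else 1)"
    by (rule sum_nonempty_subsets_alternating[OF finite_final_paths[OF W]])
  finally show ?thesis .
qed

lemma card_wba_final_paths_kdis_le:
  assumes W: "word Sig W"
  shows "finite (wba_final_paths (kdis_S Q Sig \<delta> Q0 F k) (kdis_M Q Sig \<delta> Q0 F k) (kdis_alpha Q Sig \<delta> Q0 F k)
      (kdis_F Q Sig \<delta> Q0 F k) W)"
    and "card (wba_final_paths (kdis_S Q Sig \<delta> Q0 F k) (kdis_M Q Sig \<delta> Q0 F k) (kdis_alpha Q Sig \<delta> Q0 F k)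
      (kdis_F Q Sig \<delta> Q0 F k) W) \<le> 2 ^ k"
proof -
  let ?P = "nba_final_paths \<delta> Q0 F W"
  have fin: "finite (Pow ?P - {{}})" using finite_final_paths[OF W] by simp
  then show "finite (wba_final_paths (kdis_S Q Sig \<delta> Q0 F k) (kdis_M Q Sig \<delta> Q0 F k) (kdis_alpha Q Sig \<delta> Q0 F k)
      (kdis_F Q Sig \<delta> Q0 F k) W)"
    unfolding wba_final_paths_kdis_eq_image[OF W] by simp
  have "card (shape F ` (Pow ?P - {{}})) \<le> card (Pow ?P)"
    using fin finite_final_paths[OF W] card_image_le card_mono le_trans
    by (metis Diff_subset finite_Pow_iff)
  also have "\<dots> \<le> 2 ^ k"
    using finite_final_paths[OF W] card_final_paths_le[OF W] by (simp add: card_Pow power_increasing)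
  finally show "card (wba_final_paths (kdis_S Q Sig \<delta> Q0 F k) (kdis_M Q Sig \<delta> Q0 F k) (kdis_alpha Q Sig \<delta> Q0 F k)
      (kdis_F Q Sig \<delta> Q0 F k) W) \<le> 2 ^ k"
    unfolding wba_final_paths_kdis_eq_image[OF W] .
qed

end

lemma iter_unroll_replicate: "0 < length w \<Longrightarrow> concat (replicate m w) \<frown> w\<^sup>\<omega> = w\<^sup>\<omega>"
  by (induction m) (simp_all flip: conc_conc iter_unroll)

context nba_kdis
begin

definition kdis_step :: "('q \<times> bool \<Rightarrow> nat) \<times> 'a \<times> ('q \<times> bool \<Rightarrow> nat) \<Rightarrow> bool" where
  "kdis_step e \<longleftrightarrow> fst e \<in> kstates Q k \<and> fst (snd e) \<in> Sig \<and> snd (snd e) \<in> kstates Q k \<and>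
     kdis_w Q \<delta> F k (fst e) (fst (snd e)) (snd (snd e)) \<noteq> 0"

primrec kdis_walk :: "('q \<times> bool \<Rightarrow> nat) \<Rightarrow> (('q \<times> bool \<Rightarrow> nat) \<times> 'a \<times> ('q \<times> bool \<Rightarrow> nat)) list \<Rightarrow>
    ('q \<times> bool \<Rightarrow> nat) \<Rightarrow> bool" where
  "kdis_walk r [] r' \<longleftrightarrow> r = r'"
| "kdis_walk r (e # es) r' \<longleftrightarrow> fst e = r \<and> kdis_step e \<and> kdis_walk (snd (snd e)) es r'"

definition walk_weight :: "(('q \<times> bool \<Rightarrow> nat) \<times> 'a \<times> ('q \<times> bool \<Rightarrow> nat)) list \<Rightarrow> nat" where
  "walk_weight es = (\<Prod>e\<leftarrow>es. kdis_w Q \<delta> F k (fst e) (fst (snd e)) (snd (snd e)))"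

lemma kdis_walk_append: "kdis_walk r xs r' \<Longrightarrow> kdis_walk r' ys r'' \<Longrightarrow> kdis_walk r (xs @ ys) r''"
  by (induction xs arbitrary: r) auto

lemma kdis_walk_replicate: "kdis_walk r xs r \<Longrightarrow> kdis_walk r (concat (replicate n xs)) r"
  by (induction n) (auto intro: kdis_walk_append)

lemma walk_weight_append: "walk_weight (xs @ ys) = walk_weight xs * walk_weight ys"
  by (simp add: walk_weight_def)

lemma walk_weight_replicate: "walk_weight (concat (replicate n xs)) = walk_weight xs ^ n"
  by (induction n) (auto simp: walk_weight_append walk_weight_def)

lemma walk_weight_pos: "kdis_walk r xs r' \<Longrightarrow> 1 \<le> walk_weight xs"
  by (induction xs arbitrary: r) (auto simp: walk_weight_def kdis_step_def)

lemma kdis_walk_nth: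
  assumes "kdis_walk r es r'" and "i < length es"
  shows "kdis_step (es ! i)" and "i = 0 \<Longrightarrow> fst (es ! i) = r"
    and "Suc i < length es \<Longrightarrow> snd (snd (es ! i)) = fst (es ! Suc i)"
    and "Suc i = length es \<Longrightarrow> snd (snd (es ! i)) = r'"
  using assms
proof (induction es arbitrary: r i)
  case Nil
  { case 1 then show ?case by simp }
  { case 2 then show ?case by simp }
  { case 3 then show ?case by simp }
  { case 4 then show ?case by simp }
next
  case (Cons e es)
  { case 1 then show ?case using Cons.IH(1) by (cases i) auto }
  { case 2 then show ?case by simp }
  { case 3 then show ?case using Cons.IH(2)[of 0 "snd (snd e)"] Cons.IH(3) by (cases i) auto }
  { case 4 then show ?case using Cons.IH(4) by (cases i) (auto, cases es, auto) }
qed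

lemma kdis_walk_of_rtrancl: "(r, r') \<in> (kdis_edges Q Sig \<delta> F k)\<^sup>* \<Longrightarrow> \<exists>xs. kdis_walk r xs r'"
proof (induction rule: rtrancl_induct)
  case base
  show ?case using kdis_walk.simps(1) by blast
next
  case (step y z)
  then obtain xs a where "kdis_walk r xs y" "kdis_step (y, a, z)"
    using kdis_M'_eq_0_iff by (auto simp: kdis_edges_def kdis_step_def)
  then have "kdis_walk r (xs @ [(y, a, z)]) z" by (intro kdis_walk_append) auto
  then show ?case by blast
qed

lemma kdis_walk_of_trancl:
  assumes "(r, r') \<in> (kdis_edges Q Sig \<delta> F k)\<^sup>+"
  obtains xs where "xs \<noteq> []" and "kdis_walk r xs r'"
proof -
  obtain y where y: "(r, y) \<in> (kdis_edges Q Sig \<delta> F k)\<^sup>*" "(y, r') \<in> kdis_edges Q Sig \<delta> F k"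
    using assms by (meson tranclD2)
  obtain xs where "kdis_walk r xs y" using kdis_walk_of_rtrancl[OF y(1)] by blast
  moreover obtain a where "kdis_step (y, a, r')"
    using y(2) kdis_M'_eq_0_iff by (auto simp: kdis_edges_def kdis_step_def)
  ultimately have "kdis_walk r (xs @ [(y, a, r')]) r'" by (intro kdis_walk_append) auto
  then show ?thesis using that by blast
qed

lemma lasso_run:
  assumes P: "kdis_walk r0 P s" and Z: "kdis_walk s Z s" "Z \<noteq> []"
    and r0: "r0 \<in> kstates Q k" "kdis_alpha' Q Q0 r0 \<noteq> 0" and s: "s \<in> kdis_F' Q k"
  defines "E \<equiv> P \<frown> Z\<^sup>\<omega>"
  shows "word Sig (\<lambda>i. fst (snd (E i)))" and "kdis_run (\<lambda>i. fst (snd (E i))) (\<lambda>i. fst (E i))"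
    and "kdis_accepting (\<lambda>i. fst (E i))"
    and "\<And>i. i < length P \<Longrightarrow> E i = P ! i"
    and "\<And>i. snd (snd (E i)) = fst (E (Suc i))"
proof -
  have zl: "0 < length Z" using Z(2) by simp
  have E_prefix: "E i = (P @ concat (replicate m Z)) ! i" if "i < length P + m * length Z" for i m
  proof -
    have "E = (P @ concat (replicate m Z)) \<frown> Z\<^sup>\<omega>"
      unfolding E_def using iter_unroll_replicate[OF zl, of m] by (simp flip: conc_conc)
    then show ?thesis using that by (simp add: length_concat sum_list_replicate)
  qed
  have walk: "kdis_walk r0 (P @ concat (replicate m Z)) s" for m
    using kdis_walk_append[OF P kdis_walk_replicate[OF Z(1)]] .
  have long: "Suc i < length P + Suc (Suc i) * length Z" for i
  proof -
    have "Suc (Suc i) \<le> Suc (Suc i) * length Z"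
      using mult_le_mono2[of 1 "length Z" "Suc (Suc i)"] zl by (simp only: mult_1_right Suc_le_eq)
    then show ?thesis by linarith
  qed
  have step: "kdis_step (E i)" for i
    using E_prefix[of i "Suc (Suc i)"] long[of i] kdis_walk_nth(1)[OF walk, of i "Suc (Suc i)"]
    by (simp add: length_concat sum_list_replicate)
  have link: "snd (snd (E i)) = fst (E (Suc i))" for i
    using E_prefix[of i "Suc (Suc i)"] E_prefix[of "Suc i" "Suc (Suc i)"] long[of i]
      kdis_walk_nth(3)[OF walk, of i "Suc (Suc i)"]
    by (simp add: length_concat sum_list_replicate)
  have E0: "fst (E 0) = r0"
    using E_prefix[of 0 1] zl kdis_walk_nth(2)[OF walk, of 0 1]
    by (simp add: length_concat sum_list_replicate)
  show "word Sig (\<lambda>i. fst (snd (E i)))" using step by (simp add: word_def kdis_step_def)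
  show "kdis_run (\<lambda>i. fst (snd (E i))) (\<lambda>i. fst (E i))"
    using step link E0 r0 by (simp add: kdis_run_def kdis_step_def)
  have at_s: "fst (E (length P + t * length Z)) = s" for t
    using kdis_walk_nth(2)[OF Z(1) zl] zl by (simp add: E_def)
  show "kdis_accepting (\<lambda>i. fst (E i))"
    unfolding kdis_accepting_def infinite_nat_iff_unbounded_le
  proof
    fix m
    have "m \<le> m * length Z" using mult_le_mono2[of 1 "length Z" m] zl by (simp only: mult_1_right Suc_le_eq)
    then have "m \<le> length P + m * length Z" by linarith
    then show "\<exists>n\<ge>m. n \<in> {i. fst (E i) \<in> kdis_F' Q k}" using at_s[of m] s by blast
  qed
  show "\<And>i. i < length P \<Longrightarrow> E i = P ! i" by (simp add: E_def)
  show "\<And>i. snd (snd (E i)) = fst (E (Suc i))" by (rule link)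
qed

end

context nba_kdis
begin

lemma walk_weight_nth:
  "walk_weight es = (\<Prod>i<length es. kdis_w Q \<delta> F k (fst (es ! i)) (fst (snd (es ! i))) (snd (snd (es ! i))))"
  unfolding walk_weight_def prod.list_conv_set_nth by (simp add: atLeast0LessThan)

lemma kdis_S_pumping:
  assumes q: "q \<in> kdis_S Q Sig \<delta> Q0 F k" and L: "kdis_walk q L q"
  obtains r0 s X Y Z where "r0 \<in> kstates Q k" "kdis_alpha' Q Q0 r0 \<noteq> 0" "s \<in> kdis_F' Q k"
    "kdis_walk r0 X q" "kdis_walk q Y s" "kdis_walk s Z s" "Z \<noteq> []"
    "\<And>n. kdis_walk r0 (X @ concat (replicate n L) @ Y) s"
proof -
  obtain r0 where r0: "r0 \<in> kstates Q k" "kdis_alpha' Q Q0 r0 \<noteq> 0" "(r0, q) \<in> kdis_edge_rel\<^sup>*"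
    using q unfolding kdis_S_def by blast
  obtain s where s: "s \<in> kdis_F' Q k" "(q, s) \<in> kdis_edge_rel\<^sup>*" "(s, s) \<in> kdis_edge_rel\<^sup>+"
    using q unfolding kdis_S_def by blast
  obtain X where X: "kdis_walk r0 X q" using kdis_walk_of_rtrancl[OF r0(3)] by blast
  obtain Y where Y: "kdis_walk q Y s" using kdis_walk_of_rtrancl[OF s(2)] by blast
  obtain Z where "Z \<noteq> []" "kdis_walk s Z s" using kdis_walk_of_trancl[OF s(3)] by blast
  moreover have "kdis_walk r0 (X @ concat (replicate n L) @ Y) s" for n
    by (intro kdis_walk_append[OF X] kdis_walk_append[OF kdis_walk_replicate[OF L] Y])
  ultimately show ?thesis using that r0(1,2) s(1) X Y by blast
qed

end

context kambiguous_nba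
begin

lemma rsize_mono_kdis_run:
  assumes W: "word Sig W" and run: "kdis_run W \<rho>" and acc: "kdis_accepting \<rho>" and "m \<le> m'"
  shows "rsize Q (\<rho> m) \<le> rsize Q (\<rho> m')"
proof -
  obtain S where S: "S \<in> witness_sets W \<rho>" using witness_sets_nonempty[OF W run acc] by blast
  have "card (trunc m ` S) = card (trunc m ` trunc m' ` S)" using assms(4) by simp
  also have "\<dots> \<le> card (trunc m' ` S)" using witness_set_props(1)[OF W S] by (intro card_image_le) simp
  finally show ?thesis using rsize_witness_set[OF W S] by simp
qed

lemma walk_weight_le:
  assumes P: "kdis_walk r0 P s" and Z: "kdis_walk s Z s" "Z \<noteq> []"
    and r0: "r0 \<in> kstates Q k" "kdis_alpha' Q Q0 r0 \<noteq> 0" and s: "s \<in> kdis_F' Q k"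
  shows "walk_weight P \<le> 2 ^ k"
proof -
  let ?E = "P \<frown> Z\<^sup>\<omega>"
  let ?W = "\<lambda>i. fst (snd (?E i))" and ?\<rho> = "\<lambda>i. fst (?E i)"
  note lasso = lasso_run[OF P Z r0 s]
  have "walk_weight P = weight_prod ?W ?\<rho> (length P)"
    unfolding weight_prod_def walk_weight_nth using lasso(4,5) by (intro prod.cong) (simp_all flip: lasso(5))
  also have "\<dots> \<le> card (witness_sets ?W ?\<rho>)"
    by (rule weight_prod_le_card_witness_sets[OF lasso(1-3)])
  also have "\<dots> \<le> 2 ^ k"
    by (rule card_witness_sets_le[OF lasso(1)])
  finally show ?thesis .
qed

lemma kdis_w_on_cycle:
  assumes q: "q \<in> kdis_S Q Sig \<delta> Q0 F k" and step: "kdis_step (q, a, q')"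
    and reach: "(q', q) \<in> kdis_edge_rel\<^sup>*"
  shows "kdis_w Q \<delta> F k q a q' = 1" and "rsize Q q' = rsize Q q"
proof -
  obtain Lr where Lr: "kdis_walk q' Lr q" using kdis_walk_of_rtrancl[OF reach] by blast
  define L where "L = (q, a, q') # Lr"
  have L: "kdis_walk q L q" using Lr step by (simp add: L_def)
  obtain r0 s X Y Z where r0: "r0 \<in> kstates Q k" "kdis_alpha' Q Q0 r0 \<noteq> 0" and s: "s \<in> kdis_F' Q k"
    and X: "kdis_walk r0 X q" and Y: "kdis_walk q Y s" and Z: "kdis_walk s Z s" "Z \<noteq> []"
    and P: "\<And>n. kdis_walk r0 (X @ concat (replicate n L) @ Y) s"
    using kdis_S_pumping[OF q L] by blast
  let ?w = "kdis_w Q \<delta> F k q a q'"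
  have "?w ^ Suc k \<le> walk_weight L ^ Suc k"
    using walk_weight_pos[OF Lr] by (intro power_mono) (simp_all add: walk_weight_def L_def)
  also have "\<dots> = 1 * walk_weight L ^ Suc k * 1" by simp
  also have "\<dots> \<le> walk_weight X * walk_weight L ^ Suc k * walk_weight Y"
    using walk_weight_pos[OF X] walk_weight_pos[OF Y] by (intro mult_le_mono) simp_all
  also have "\<dots> = walk_weight (X @ concat (replicate (Suc k) L) @ Y)"
    by (simp only: walk_weight_append walk_weight_replicate mult.assoc)
  also have "\<dots> \<le> 2 ^ k" by (rule walk_weight_le[OF P Z r0 s])
  finally have w_pow: "?w ^ Suc k \<le> 2 ^ k" .
  show "?w = 1"
  proof (rule ccontr)
    assume "?w \<noteq> 1"
    moreover have "?w \<noteq> 0" using step by (simp add: kdis_step_def)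
    ultimately have "2 \<le> ?w" by linarith
    then have "2 ^ Suc k \<le> ?w ^ Suc k" by (rule power_mono) simp
    moreover have "(2::nat) ^ k < 2 ^ Suc k" by simp
    ultimately show False using w_pow by linarith
  qed
  let ?P = "X @ L @ Y" and ?E = "(X @ L @ Y) \<frown> Z\<^sup>\<omega>"
  have P1: "kdis_walk r0 ?P s" using P[of 1] by simp
  note lasso = lasso_run[OF P1 Z r0 s]
  have L_nth: "?E (length X + i) = L ! i" if "i < length L" for i
    using lasso(4)[of "length X + i"] that by (simp add: nth_append)
  have "fst (?E (length X)) = q" using L_nth[of 0] by (simp add: L_def)
  moreover have "fst (?E (Suc (length X))) = q'" using L_nth[of 0] lasso(5)[of "length X"] by (simp add: L_def)
  moreover have "fst (?E (length X + length L)) = q"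
  proof -
    have "snd (snd (L ! (length L - 1))) = q" using kdis_walk_nth(4)[OF L, of "length L - 1"] by (simp add: L_def)
    then show ?thesis
      using L_nth[of "length L - 1"] lasso(5)[of "length X + (length L - 1)"] by (simp add: L_def)
  qed
  moreover have "length X \<le> Suc (length X)" "Suc (length X) \<le> length X + length L"
    by (simp_all add: L_def)
  ultimately show "rsize Q q' = rsize Q q"
    using rsize_mono_kdis_run[OF lasso(1-3)] by (metis le_antisym)
qed

lemma mword_nonzero_rtrancl:
  "u \<in> lists Sig \<Longrightarrow> Mword (kdis_S Q Sig \<delta> Q0 F k) (kdis_M Q Sig \<delta> Q0 F k) u x y \<noteq> 0 \<Longrightarrow>
    (x, y) \<in> kdis_edge_rel\<^sup>*"
proof (induction u arbitrary: x)
  case Nil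
  then show ?case by (simp split: if_splits)
next
  case (Cons a u)
  then obtain p where p: "p \<in> kdis_S Q Sig \<delta> Q0 F k" and m: "kdis_M Q Sig \<delta> Q0 F k a x p \<noteq> 0"
    and mw: "Mword (kdis_S Q Sig \<delta> Q0 F k) (kdis_M Q Sig \<delta> Q0 F k) u p y \<noteq> 0"
    by (auto elim: sum.not_neutral_contains_not_neutral)
  then have "(x, p) \<in> kdis_edge_rel"
    using Cons.prems(1) by (auto simp: kdis_M_def kdis_S_def kdis_edges_def split: if_splits)
  moreover have "(p, y) \<in> kdis_edge_rel\<^sup>*" using Cons.IH[OF _ mw] Cons.prems(1) by simp
  ultimately show ?case by simp
qed

lemma ultimately_stable_kdis:
  "ultimately_stable (kdis_S Q Sig \<delta> Q0 F k) Sig (kdis_M Q Sig \<delta> Q0 F k)"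
  unfolding ultimately_stable_def
proof (intro ballI impI)
  fix q q' a assume q: "q \<in> kdis_S Q Sig \<delta> Q0 F k" and q': "q' \<in> kdis_S Q Sig \<delta> Q0 F k" and a: "a \<in> Sig"
    and "\<exists>u\<in>lists Sig. Mword (kdis_S Q Sig \<delta> Q0 F k) (kdis_M Q Sig \<delta> Q0 F k) u q' q \<noteq> 0"
  then have reach: "(q', q) \<in> kdis_edge_rel\<^sup>*" using mword_nonzero_rtrancl by blast
  show "kdis_M Q Sig \<delta> Q0 F k a q q' \<in> {0, 1}"
  proof (cases "kdis_w Q \<delta> F k q a q' = 0")
    case True
    then show ?thesis by (simp add: kdis_M_def kdis_M'_def)
  next
    case False
    then have "kdis_step (q, a, q')" using q q' a by (simp add: kdis_step_def kdis_S_def)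
    then show ?thesis
      using kdis_w_on_cycle[OF q _ reach] q q' by (simp add: kdis_M_def kdis_M'_def)
  qed
qed

end


theorem theorem4:
  fixes Q :: "'q set" and Sig :: "'a set" and \<delta> :: "'q \<Rightarrow> 'a \<Rightarrow> 'q set"
    and Q0 F :: "'q set" and k :: nat
  assumes "nba Q Sig \<delta> Q0 F" and "k \<ge> 1" and "k_ambiguous Q Sig \<delta> Q0 F k"
  shows "IBA (kdis_S Q Sig \<delta> Q0 F k) Sig (kdis_M Q Sig \<delta> Q0 F k) (kdis_alpha Q Sig \<delta> Q0 F k)
             (kdis_F Q Sig \<delta> Q0 F k) \<and>
         (\<forall>w. word Sig w \<longrightarrow>
           (wba_L (kdis_S Q Sig \<delta> Q0 F k) (kdis_M Q Sig \<delta> Q0 F k) (kdis_alpha Q Sig \<delta> Q0 F k)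
                  (kdis_F Q Sig \<delta> Q0 F k) w = 1
            \<longleftrightarrow> nba_final_paths \<delta> Q0 F w \<noteq> {}))"
proof -
  interpret kambiguous_nba Q Sig \<delta> Q0 F k
    using assms(1,3) by (simp add: kambiguous_nba_def nba_kdis_def kambiguous_nba_axioms_def)
  have "finite (kdis_S Q Sig \<delta> Q0 F k)"
    using finite_kstates[OF finite_Q] by (rule finite_subset[rotated]) (auto simp: kdis_S_def)
  then show ?thesis
    using ultimately_stable_kdis card_wba_final_paths_kdis_le wba_L_kdis unfolding IBA_def by auto
qed

end
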